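(* Let $\omega$ be an infinite (one-sided or bi-sided) word over a finite alphabet $\mathcal A$ such that the subshift $(\Sigma_\omega,S)$ is uniquely ergodic. Assume that the complexity function $p$ of its language is unbounded and satisfies $\lim_n\frac{p(n+1)}{p(n)}=1$. Then the Benjamini–Schramm limit of the labelled Rauzy digraphs $\vec R(n)$ exists, is supported on arc-labellings of $\vec{\mathbf Z}$, and, under the identification of such labellings with $\mathcal A^{\mathbf Z}$, equals the unique $S$-invariant probability measure on the natural extension $(\tilde\Sigma_\omega,S)$.
   Context: $\Sigma_\omega$ is the closure of the shift-orbit of $\omega$ (in $\mathcal A^{\mathbf N}$ or $\mathcal A^{\mathbf Z}$). Its language $\mathcal L$ is the set of finite subwords of $\omega$, $p(n)=|\mathcal L\cap\mathcal A^n|$. The natural extension $\tilde\Sigma_\omega$ is the bi-sided subshift of all $\tau\in\mathcal A^{\mathbf Z}$ all of whose finite subwords lie in $\mathcal L$. For $n\ge1$, the labelled Rauzy digraph $\vec R(n)$ has vertex set $\mathcal L\cap\mathcal A^n$ and, for each word $aub\in\mathcal L\cap\mathcal A^{n+1}$ ($a,b\in\mathcal A$), one arc from $au$ to $ub$ carrying label $b$. Benjamini–Schramm limit: for a finite labelled digraph $G$, let $\nu_G$ be the law of the isomorphism class (preserving orientation and labels) of the rooted connected component of a uniformly random vertex, in the compact space of rooted connected labelled digraphs of bounded degree with the local topology; the limit of $(G_n)$ is the weak limit of $\nu_{G_n}$. A rooted arc-labelling of the directed line $\vec{\mathbf Z}$ (vertices $\mathbf Z$, arcs $i\to i+1$,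 root $0$) is identified with $x\in\mathcal A^{\mathbf Z}$, $x_i$ being the label of the arc $i\to i+1$. *)

theory Defs
  imports "HOL-Probability.Probability"
begin

definition lang_N :: "(nat \<Rightarrow> 'a) \<Rightarrow> 'a list set" where
  "lang_N \<omega> = {map (\<lambda>i. \<omega> (j + i)) [0..<k] | j k. True}"

definition lang_Z :: "(int \<Rightarrow> 'a) \<Rightarrow> 'a list set" where
  "lang_Z \<omega> = {map (\<lambda>i. \<omega> (j + int i)) [0..<k] | j k. True}"

definition complexity :: "'a list set \<Rightarrow> nat \<Rightarrow> nat" where
  "complexity L n = card {w \<in> L. length w = n}"

definition shiftN :: "(nat \<Rightarrow> 'a) \<Rightarrow> nat \<Rightarrow> 'a" where
  "shiftN x = (\<lambda>i. x (Suc i))"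

definition shiftZ :: "(int \<Rightarrow> 'a) \<Rightarrow> int \<Rightarrow> 'a" where
  "shiftZ x = (\<lambda>i. x (i + 1))"

definition seq_top :: "('i \<Rightarrow> 'a) topology" where
  "seq_top = product_topology (\<lambda>_. discrete_topology UNIV) UNIV"

definition SigmaN :: "(nat \<Rightarrow> 'a) \<Rightarrow> (nat \<Rightarrow> 'a) set" where
  "SigmaN \<omega> = seq_top closure_of range (\<lambda>k. (shiftN ^^ k) \<omega>)"

definition SigmaZ :: "(int \<Rightarrow> 'a) \<Rightarrow> (int \<Rightarrow> 'a) set" where
  "SigmaZ \<omega> = seq_top closure_of {(\<lambda>i. \<omega> (i + k)) | k :: int. True}"

text \<open>Natural extension: bi-sided sequences all of whose finite subwords lie in L.\<close>
definition natext :: "'a list set \<Rightarrow> (int \<Rightarrow> 'a) set" where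
  "natext L = {\<tau>. \<forall>j k. map (\<lambda>i. \<tau> (j + int i)) [0..<k] \<in> L}"

definition seq_space :: "('i \<Rightarrow> 'a) measure" where
  "seq_space = PiM UNIV (\<lambda>_. count_space UNIV)"

text \<open>T-invariant Borel probability measures on X (viewed as measures on A^I of full mass on X).\<close>
definition inv_probs :: "(('i \<Rightarrow> 'a) \<Rightarrow> ('i \<Rightarrow> 'a)) \<Rightarrow> ('i \<Rightarrow> 'a) set \<Rightarrow> ('i \<Rightarrow> 'a) measure set" where
  "inv_probs T X = {M. sets M = sets seq_space \<and> prob_space M \<and> emeasure M X = 1
                        \<and> distr M seq_space T = M}"

definition uniquely_ergodic :: "(('i \<Rightarrow> 'a) \<Rightarrow> ('i \<Rightarrow> 'a)) \<Rightarrow> ('i \<Rightarrow> 'a) set \<Rightarrow> bool" where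
  "uniquely_ergodic T X \<longleftrightarrow> (\<exists>!M. M \<in> inv_probs T X)"

text \<open>A labelled digraph is a pair (vertex set, set of arcs (source, label, target)).\<close>
type_synonym ('v, 'a) ldigraph = "'v set \<times> ('v \<times> 'a \<times> 'v) set"
type_synonym ('v, 'a) rooted_ldigraph = "'v set \<times> ('v \<times> 'a \<times> 'v) set \<times> 'v"

definition rauzy :: "'a list set \<Rightarrow> nat \<Rightarrow> ('a list, 'a) ldigraph" where
  "rauzy L n = ({w \<in> L. length w = n},
                {(a # u, b, u @ [b]) | a u b. a # u @ [b] \<in> L \<and> length u + 1 = n})"

definition adj_rel :: "('v \<times> 'a \<times> 'v) set \<Rightarrow> ('v \<times> 'v) set" where
  "adj_rel E = {(u, w). \<exists>a. (u, a, w) \<in> E \<or> (w, a, u) \<in> E}"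

definition ball :: "('v, 'a) ldigraph \<Rightarrow> 'v \<Rightarrow> nat \<Rightarrow> ('v, 'a) rooted_ldigraph" where
  "ball G v r =
     (let B = {w \<in> fst G. \<exists>k\<le>r. (v, w) \<in> (adj_rel (snd G)) ^^ k}
      in (B, {(u, a, w) \<in> snd G. u \<in> B \<and> w \<in> B}, v))"

definition rooted_iso :: "('v, 'a) rooted_ldigraph \<Rightarrow> ('w, 'a) rooted_ldigraph \<Rightarrow> bool" where
  "rooted_iso G H \<longleftrightarrow>
     (case G of (V1, E1, o1) \<Rightarrow> case H of (V2, E2, o2) \<Rightarrow>
       \<exists>f. bij_betw f V1 V2 \<and> f o1 = o2 \<and>
           (\<forall>u\<in>V1. \<forall>w\<in>V1. \<forall>a. (u, a, w) \<in> E1 \<longleftrightarrow> (f u, a, f w) \<in> E2))"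

definition finite_rooted_ldigraph :: "('v, 'a) rooted_ldigraph \<Rightarrow> bool" where
  "finite_rooted_ldigraph H \<longleftrightarrow>
     (case H of (V, E, rt) \<Rightarrow> finite V \<and> rt \<in> V \<and> E \<subseteq> V \<times> UNIV \<times> V)"

text \<open>Frequency, among the vertices of G, of roots whose r-ball is isomorphic to H
  (= \<nu>_G of the cylinder event "r-ball \<cong> H").\<close>
definition bs_freq :: "('v, 'a) ldigraph \<Rightarrow> nat \<Rightarrow> ('w, 'a) rooted_ldigraph \<Rightarrow> real" where
  "bs_freq G r H = real (card {v \<in> fst G. rooted_iso (ball G v r) H}) / real (card (fst G))"

definition line_graph :: "(int \<Rightarrow> 'a) \<Rightarrow> (int, 'a) ldigraph" where
  "line_graph x = (UNIV, {(i, x i, i + 1) | i. True})"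

text \<open>Local (Benjamini--Schramm) convergence
  of bounded-degree labelled graphs is convergence of the frequencies of all rooted r-balls.\<close>
definition BS_limit_line :: "(nat \<Rightarrow> ('v, 'a) ldigraph) \<Rightarrow> (int \<Rightarrow> 'a) measure \<Rightarrow> bool" where
  "BS_limit_line G \<mu> \<longleftrightarrow>
     (\<forall>r (H :: (nat, 'a) rooted_ldigraph). finite_rooted_ldigraph H \<longrightarrow>
        (\<lambda>n. bs_freq (G n) r H) \<longlonglongrightarrow>
          measure \<mu> {x \<in> space \<mu>. rooted_iso (ball (line_graph x) 0 r) H})"

end

(*
  For each n, choose one right extension of every factor of length n; following it defines a
  map advance on the vertices of the Rauzy graph R(n), and every vertex v determines a
  bi-infinite labelling line_word n v of the line: v on the negative positions, the labels of
  the advance-walk from v on the others.  At most s(n) = p(n+1) - p(n) vertices are right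
  special, at most s(n) + 1 are left special, at most s(n) + 1 are missed by advance, and at
  most |A|^l vertices return to themselves after l steps of advance, independently of n.  Away
  from the preimages of these vertices under a bounded number of steps of advance, the r-ball
  of R(n) around v is the labelled path read off line_word n v, and advance almost preserves
  the counting measure.  Hence the ball statistics of R(n) differ from those of the empirical
  law nu_n of line_word n v by O((s(n) + 1) / p(n)), which tends to 0 under the growth
  hypotheses; moreover every subsequential limit of nu_n (which exists by a diagonal argument
  and Kolmogorov's extension theorem on the compact space A^Z) is shift invariant and carried
  by the natural extension.  Unique ergodicity of the subshift passes to its natural extension
  (for one-sided words by projecting to the nonnegative coordinates), so nu_n converges to
  the unique invariant measure.
*)

theory Submission
  imports Defs "HOL-Library.Diagonal_Subsequence"
begin

section \<open>Sequence spaces over a finite alphabet\<close>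

lemma space_seq_space [simp]: "space seq_space = UNIV"
  by (simp add: seq_space_def space_PiM)

lemma sets_PiM_count_space_finite:
  "finite J \<Longrightarrow> sets (PiM J (\<lambda>_::'i. count_space (UNIV::'a::finite set))) = Pow (PiE J (\<lambda>_. UNIV))"
  by (simp add: count_space_PiM_finite countable_finite)

lemma prod_emb_UNIV_eq_restrict:
  "prod_emb UNIV (\<lambda>_::'i. count_space (UNIV::'a set)) W Y = {x. restrict x W \<in> Y}"
  by (auto simp: prod_emb_def)

lemma closedin_prod_emb:
  assumes J: "finite J" and X: "X \<subseteq> PiE J (\<lambda>_. UNIV)"
  shows "closedin (product_topology (\<lambda>_::'i. discrete_topology (UNIV::'a::finite set)) UNIV)
     {x. restrict x J \<in> X}"
proof -
  have "finite X" using X J by (auto intro: finite_subset simp: finite_PiE)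
  moreover have eq: "{x. restrict x J \<in> X} = (\<Union>y\<in>X. PiE UNIV (\<lambda>j. if j \<in> J then {y j} else UNIV))"
  proof (intro set_eqI iffI)
    fix x assume "x \<in> {x. restrict x J \<in> X}"
    then show "x \<in> (\<Union>y\<in>X. PiE UNIV (\<lambda>j. if j \<in> J then {y j} else UNIV))"
      by (intro UN_I[of "restrict x J"]) (auto simp: PiE_iff)
  next
    fix x assume "x \<in> (\<Union>y\<in>X. PiE UNIV (\<lambda>j. if j \<in> J then {y j} else UNIV))"
    then obtain y where y: "y \<in> X" "\<forall>j. x j \<in> (if j \<in> J then {y j} else UNIV)"
      by (auto simp: PiE_iff)
    then have "restrict x J = y"
      using X by (intro extensionalityI[of _ J]) (auto simp: PiE_iff split: if_splits)
    then show "x \<in> {x. restrict x J \<in> X}" using y by simp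
  qed
  ultimately show ?thesis
    unfolding eq by (intro closedin_Union) (auto simp: closedin_product_topology)
qed

text \<open>The continuity condition of the projective limit below; it holds because \<open>A\<^sup>I\<close> is compact.\<close>

lemma INT_cylinders_nonempty:
  fixes J :: "nat \<Rightarrow> 'i set" and X :: "nat \<Rightarrow> ('i \<Rightarrow> 'a::finite) set"
  assumes "\<And>i. finite (J i)" "\<And>i. X i \<subseteq> PiE (J i) (\<lambda>_. UNIV)" "\<And>i. X i \<noteq> {}"
    and "decseq (\<lambda>i. {x. restrict x (J i) \<in> X i})"
  shows "(\<Inter>i. {x. restrict x (J i) \<in> X i}) \<noteq> {}"
proof (rule compact_space_imp_nest)
  show "compact_space (product_topology (\<lambda>_::'i. discrete_topology (UNIV::'a set)) UNIV)"
    by (simp add: compact_space_product_topology compact_space_discrete_topology)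
  fix i
  show "closedin (product_topology (\<lambda>_. discrete_topology UNIV) UNIV) {x. restrict x (J i) \<in> X i}"
    using assms by (intro closedin_prod_emb) auto
  obtain y where y: "y \<in> X i" using assms(3) by blast
  then have "y \<in> PiE (J i) (\<lambda>_. UNIV)" using assms(2) by blast
  then have "restrict y (J i) = y" by (simp add: PiE_iff extensional_restrict)
  then have "y \<in> {x. restrict x (J i) \<in> X i}" using y by simp
  then show "{x. restrict x (J i) \<in> X i} \<noteq> {}" by blast
qed (use assms(4) in auto)

context
  fixes q :: "'i set \<Rightarrow> ('i \<Rightarrow> 'a::finite) \<Rightarrow> real"
  assumes q_nonneg: "\<And>J y. 0 \<le> q J y"
    and q_sum: "\<And>J. finite J \<Longrightarrow> (\<Sum>y\<in>PiE J (\<lambda>_. UNIV). q J y) = 1"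
    and q_consistent: "\<And>J H y. finite H \<Longrightarrow> J \<subseteq> H \<Longrightarrow> y \<in> PiE J (\<lambda>_. UNIV) \<Longrightarrow>
        q J y = (\<Sum>z\<in>{z\<in>PiE H (\<lambda>_. UNIV). restrict z J = y}. q H z)"
begin

definition marginal :: "'i set \<Rightarrow> ('i \<Rightarrow> 'a) measure" where
  "marginal J = point_measure (PiE J (\<lambda>_. UNIV)) (\<lambda>y. ennreal (q J y))"

lemma sets_marginal: "finite J \<Longrightarrow> sets (marginal J) = sets (PiM J (\<lambda>_. count_space UNIV))"
  by (simp add: marginal_def sets_point_measure sets_PiM_count_space_finite)

lemma emeasure_marginal:
  "finite J \<Longrightarrow> Y \<subseteq> PiE J (\<lambda>_. UNIV) \<Longrightarrow> emeasure (marginal J) Y = ennreal (\<Sum>y\<in>Y. q J y)"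
  unfolding marginal_def using q_nonneg
  by (subst emeasure_point_measure_finite) (auto simp: finite_PiE)

lemma prob_space_marginal:
  assumes "finite J"
  shows "prob_space (marginal J)"
proof (rule prob_spaceI)
  have "space (marginal J) = PiE J (\<lambda>_. UNIV)" by (simp add: marginal_def space_point_measure)
  then show "emeasure (marginal J) (space (marginal J)) = 1"
    using assms by (simp add: emeasure_marginal q_sum)
qed

lemma marginal_eq_distr_restrict:
  assumes JH: "J \<subseteq> H" "finite H"
  shows "marginal J = distr (marginal H) (PiM J (\<lambda>_. count_space UNIV)) (\<lambda>f. restrict f J)"
proof (rule measure_eqI)
  have J: "finite J" using JH by (auto intro: finite_subset)
  then show "sets (marginal J) = sets (distr (marginal H) (PiM J (\<lambda>_. count_space UNIV)) (\<lambda>f. restrict f J))"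
    by (simp add: sets_marginal)
  have meas: "(\<lambda>f. restrict f J) \<in> measurable (marginal H) (PiM J (\<lambda>_. count_space UNIV))"
    using measurable_restrict_subset[OF JH(1)]
    by (simp add: measurable_cong_sets[OF sets_marginal[OF JH(2)] refl])
  fix A assume "A \<in> sets (marginal J)"
  then have A: "A \<subseteq> PiE J (\<lambda>_. UNIV)" "A \<in> sets (PiM J (\<lambda>_. count_space UNIV))"
    using J by (auto simp: sets_marginal sets_PiM_count_space_finite)
  define Z where "Z = {z \<in> PiE H (\<lambda>_. UNIV). restrict z J \<in> A}"
  have fin: "finite (PiE H (\<lambda>_::'i. UNIV::'a set))" "finite (PiE J (\<lambda>_::'i. UNIV::'a set))"
    using JH J by (simp_all add: finite_PiE)
  have "(\<lambda>f. restrict f J) -` A \<inter> space (marginal H) = Z"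
    by (auto simp: Z_def marginal_def space_point_measure)
  then have "emeasure (distr (marginal H) (PiM J (\<lambda>_. count_space UNIV)) (\<lambda>f. restrict f J)) A =
      emeasure (marginal H) Z"
    using emeasure_distr[OF meas A(2)] by simp
  also have "\<dots> = ennreal (\<Sum>y\<in>A. \<Sum>z\<in>{z \<in> Z. restrict z J = y}. q H z)"
    using fin A by (subst sum.group) (auto simp: emeasure_marginal JH(2) Z_def intro: finite_subset)
  also have "(\<Sum>y\<in>A. \<Sum>z\<in>{z \<in> Z. restrict z J = y}. q H z) = (\<Sum>y\<in>A. q J y)"
    using A q_consistent[OF JH(2,1)] by (intro sum.cong) (auto simp: Z_def intro!: sum.cong)
  also have "ennreal (\<Sum>y\<in>A. q J y) = emeasure (marginal J) A"
    using A J by (simp add: emeasure_marginal)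
  finally show "emeasure (marginal J) A =
      emeasure (distr (marginal H) (PiM J (\<lambda>_. count_space UNIV)) (\<lambda>f. restrict f J)) A"
    by (rule sym)
qed

lemma INT_prod_emb_marginal_nonempty:
  fixes J :: "nat \<Rightarrow> 'i set" and X :: "nat \<Rightarrow> ('i \<Rightarrow> 'a) set"
  assumes J: "\<And>i. finite (J i)" and X: "\<And>i. X i \<in> sets (PiM (J i) (\<lambda>_. count_space UNIV))"
    and dec: "decseq (\<lambda>i. prod_emb UNIV (\<lambda>_. count_space UNIV) (J i) (X i))"
    and pos: "0 < (INF i. emeasure (marginal (J i)) (X i))"
  shows "(\<Inter>i. prod_emb UNIV (\<lambda>_. count_space UNIV) (J i) (X i)) \<noteq> {}"
proof -
  have "X i \<noteq> {}" for i
  proof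
    assume "X i = {}"
    then have "(INF i. emeasure (marginal (J i)) (X i)) \<le> 0"
      by (intro INF_lower2[of i]) simp_all
    with pos show False by simp
  qed
  moreover have "X i \<subseteq> PiE (J i) (\<lambda>_. UNIV)" for i
    using X[of i] by (simp add: sets_PiM_count_space_finite[OF J])
  ultimately show ?thesis
    using J dec unfolding prod_emb_UNIV_eq_restrict by (intro INT_cylinders_nonempty)
qed

lemma kolmogorov_extension_finite_alphabet:
  obtains \<rho> where "prob_space \<rho>" "sets \<rho> = sets seq_space"
    "\<And>J Y. finite J \<Longrightarrow> Y \<subseteq> PiE J (\<lambda>_. UNIV) \<Longrightarrow> measure \<rho> {x. restrict x J \<in> Y} = (\<Sum>y\<in>Y. q J y)"
proof -
  interpret projective_family UNIV marginal "\<lambda>_::'i. count_space (UNIV::'a set)"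
  proof (rule projective_family.intro)
    fix J H :: "'i set"
    assume "J \<subseteq> H" "finite H"
    then show "marginal J = distr (marginal H) (PiM J (\<lambda>_. count_space UNIV)) (\<lambda>f. restrict f J)"
      by (rule marginal_eq_distr_restrict)
  next
    fix J :: "'i set"
    assume "finite J"
    then show "prob_space (marginal J)" by (rule prob_space_marginal)
  qed
  have lim: "emeasure lim {x. restrict x J \<in> Y} = ennreal (\<Sum>y\<in>Y. q J y)"
    if J: "finite J" and Y: "Y \<subseteq> PiE J (\<lambda>_. UNIV)" for J Y
  proof -
    have Y': "Y \<in> sets (PiM J (\<lambda>_. count_space UNIV))"
      using Y by (simp add: sets_PiM_count_space_finite[OF J])
    have "emeasure lim (prod_emb UNIV (\<lambda>_. count_space UNIV) J Y) = emeasure (marginal J) Y"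
      by (rule emeasure_lim[OF J subset_UNIV Y'], rule INT_prod_emb_marginal_nonempty) auto
    then show ?thesis using J Y by (simp add: prod_emb_UNIV_eq_restrict emeasure_marginal)
  qed
  have "space lim = {x. restrict x {} \<in> PiE {} (\<lambda>_. UNIV)}"
    by (auto simp: space_PiM restrict_def)
  then have "emeasure lim (space lim) = 1"
    using lim[of "{}" "PiE {} (\<lambda>_. UNIV)"] q_sum[of "{}"] by simp
  then have "prob_space lim" by (rule prob_spaceI)
  moreover have "sets lim = sets seq_space" by (simp add: seq_space_def)
  moreover have "measure lim {x. restrict x J \<in> Y} = (\<Sum>y\<in>Y. q J y)"
    if "finite J" "Y \<subseteq> PiE J (\<lambda>_. UNIV)" for J Y
    using lim[OF that] q_nonneg by (simp add: measure_def sum_nonneg)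
  ultimately show ?thesis by (rule that)
qed

end

lemma diagonal_convergent_subseq:
  fixes a :: "'b::countable \<Rightarrow> nat \<Rightarrow> real"
  assumes bnd: "\<And>l n. \<bar>a l n\<bar> \<le> B"
  shows "\<exists>t. strict_mono t \<and> (\<forall>l. convergent (\<lambda>k. a l (t k)))"
proof -
  define P where "P k r = convergent (\<lambda>m. a (from_nat k) (r m))" for k and r :: "nat \<Rightarrow> nat"
  interpret subseqs P
  proof
    fix k and s :: "nat \<Rightarrow> nat" assume "strict_mono s"
    have "bounded (range (\<lambda>m. a (from_nat k) (s m)))"
      using bnd by (intro boundedI[of _ B]) auto
    then obtain l r where r: "strict_mono r" "((\<lambda>m. a (from_nat k) (s m)) \<circ> r) \<longlonglongrightarrow> l"
      using bounded_imp_convergent_subsequence by blast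
    then have "P k (s \<circ> r)" unfolding P_def convergent_def by (auto simp: comp_def)
    then show "\<exists>r'. strict_mono r' \<and> P k (s \<circ> r')" using r(1) by blast
  qed
  have "P k (diagseq \<circ> (+) (Suc k))" for k
  proof (rule diagseq_holds)
    fix r s :: "nat \<Rightarrow> nat" and n assume "strict_mono r" "P n s"
    then show "P n (s \<circ> r)"
      unfolding P_def using convergent_subseq_convergent[of "\<lambda>m. a (from_nat n) (s m)" r]
      by (simp add: comp_def)
  qed
  then have "convergent (\<lambda>m. a (from_nat k) (diagseq m))" for k
  proof -
    have "convergent (\<lambda>m. a (from_nat k) (diagseq (Suc k + m)))"
      using \<open>P k (diagseq \<circ> (+) (Suc k))\<close> unfolding P_def by (simp only: comp_def)
    then have h: "convergent (\<lambda>m. a (from_nat k) (diagseq (m + Suc k)))" by (simp only: add.commute)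
    show ?thesis
      by (rule convergent_ignore_initial_segment[of "\<lambda>m. a (from_nat k) (diagseq m)" "Suc k",
            THEN iffD1, OF h])
  qed
  then have "convergent (\<lambda>m. a l (diagseq m))" for l
    using from_nat_to_nat[of l] by metis
  then show ?thesis using subseq_diagseq by blast
qed

lemma LIMSEQ_if_subseqs_LIMSEQ:
  fixes a :: "nat \<Rightarrow> real"
  assumes "\<And>s::nat\<Rightarrow>nat. strict_mono s \<Longrightarrow> \<exists>t::nat\<Rightarrow>nat. strict_mono t \<and> (\<lambda>k. a (s (t k))) \<longlonglongrightarrow> c"
  shows "a \<longlonglongrightarrow> c"
proof (rule ccontr)
  assume "\<not> a \<longlonglongrightarrow> c"
  then have "\<not> (\<forall>e>0. \<forall>\<^sub>F n in sequentially. dist (a n) c < e)" unfolding tendsto_iff .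
  then obtain e where e: "e > 0" "\<not> (\<forall>\<^sub>F n in sequentially. dist (a n) c < e)" by blast
  then have "\<not> (\<exists>N. \<forall>n\<ge>N. dist (a n) c < e)" by (simp add: eventually_sequentially)
  then have "\<forall>N. \<exists>n\<ge>N. dist (a n) c \<ge> e" by (simp add: not_less)
  then have "infinite {n. dist (a n) c \<ge> e}" unfolding infinite_nat_iff_unbounded_le by auto
  from infinite_enumerate[OF \<open>infinite {n. dist (a n) c \<ge> e}\<close>]
  obtain s :: "nat \<Rightarrow> nat" where s0: "strict_mono s \<and> (\<forall>n. s n \<in> {n. dist (a n) c \<ge> e})" ..
  then have s: "strict_mono s" "\<forall>n. s n \<in> {n. dist (a n) c \<ge> e}" by auto
  obtain t where t: "strict_mono t" "(\<lambda>k. a (s (t k))) \<longlonglongrightarrow> c" using assms[OF s(1)] by blast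
  have "\<forall>\<^sub>F k in sequentially. dist (a (s (t k))) c < e" by (rule tendstoD[OF t(2) e(1)])
  then obtain N where "\<forall>k\<ge>N. dist (a (s (t k))) c < e" by (auto simp: eventually_sequentially)
  then have "dist (a (s (t N))) c < e" by simp
  moreover have "dist (a (s (t N))) c \<ge> e" using s(2) by simp
  ultimately show False by simp
qed

lemma increment_over_value_tendsto_0:
  fixes p :: "nat \<Rightarrow> nat"
  assumes pos: "\<And>n. p n > 0" and mono: "\<And>n. p n \<le> p (Suc n)"
    and ratio: "(\<lambda>n. real (p (Suc n)) / real (p n)) \<longlonglongrightarrow> 1"
    and unb: "\<not> bdd_above (range p)"
  shows "(\<lambda>n. real (p (Suc n) - p n + 1) / real (p n)) \<longlonglongrightarrow> 0"
proof -
  have m: "mono p" using mono by (simp add: mono_iff_le_Suc)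
  have "\<exists>N. \<forall>n\<ge>N. r < real (p n)" for r :: real
  proof -
    have "\<exists>N. p N > nat \<lceil>r\<rceil>"
    proof (rule ccontr)
      assume "\<not> (\<exists>N. p N > nat \<lceil>r\<rceil>)"
      then have "\<forall>N. p N \<le> nat \<lceil>r\<rceil>" by (simp add: not_less)
      then have "bdd_above (range p)" by (intro bdd_aboveI2[of _ _ "nat \<lceil>r\<rceil>"]) auto
      then show False using unb by simp
    qed
    then obtain N where N: "p N > nat \<lceil>r\<rceil>" by blast
    have "r < real (p n)" if "n \<ge> N" for n
    proof -
      have "p N \<le> p n" using m that by (simp add: monoD)
      moreover have "r \<le> real (nat \<lceil>r\<rceil>)" by (rule real_nat_ceiling_ge)
      moreover have "real (nat \<lceil>r\<rceil>) < real (p N)" using N by simp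
      ultimately show ?thesis by linarith
    qed
    then show ?thesis by blast
  qed
  then have inv: "(\<lambda>n. inverse (real (p n))) \<longlonglongrightarrow> 0" by (rule LIMSEQ_inverse_zero)
  have eq: "real (p (Suc n) - p n + 1) / real (p n)
      = (real (p (Suc n)) / real (p n) - 1) + inverse (real (p n))" for n
    using pos[of n] mono[of n] by (simp add: field_simps of_nat_diff)
  have "(\<lambda>n. (real (p (Suc n)) / real (p n) - 1) + inverse (real (p n))) \<longlonglongrightarrow> (1 - 1) + 0"
    by (intro tendsto_intros ratio inv)
  then show ?thesis unfolding eq by simp
qed

definition determined_by :: "'i set \<Rightarrow> ('i \<Rightarrow> 'a) set \<Rightarrow> bool" where
  "determined_by W A \<longleftrightarrow> (\<forall>x x'. (\<forall>i\<in>W. x i = x' i) \<longrightarrow> (x \<in> A \<longleftrightarrow> x' \<in> A))"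

lemma determined_by_eq:
  assumes "determined_by W A"
  shows "A = {x. restrict x W \<in> (\<lambda>x. restrict x W) ` A}"
proof
  show "{x. restrict x W \<in> (\<lambda>x. restrict x W) ` A} \<subseteq> A"
  proof
    fix x assume "x \<in> {x. restrict x W \<in> (\<lambda>x. restrict x W) ` A}"
    then obtain x' where "x' \<in> A" "restrict x W = restrict x' W" by auto
    then show "x \<in> A" using assms unfolding determined_by_def by (metis restrict_apply')
  qed
qed auto

lemma determined_by_in_sets:
  assumes "determined_by W A" "finite W"
  shows "A \<in> sets (seq_space :: ('i \<Rightarrow> 'a::finite) measure)"
proof -
  have "(\<lambda>x. restrict x W) ` A \<in> sets (PiM W (\<lambda>_::'i. count_space (UNIV::'a set)))"
    using sets_PiM_count_space_finite[OF assms(2)] by auto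
  then have "prod_emb UNIV (\<lambda>_. count_space UNIV) W ((\<lambda>x. restrict x W) ` A) \<in> sets seq_space"
    unfolding seq_space_def by (intro measurable_prod_emb) auto
  then show ?thesis using determined_by_eq[OF assms(1)] by (simp add: prod_emb_UNIV_eq_restrict)
qed

lemma determined_by_restrict:
  fixes Y :: "('i \<Rightarrow> 'a) set"
  shows "determined_by J {x. restrict x J \<in> Y}"
  unfolding determined_by_def
proof (intro allI impI)
  fix x x' :: "'i \<Rightarrow> 'a"
  assume "\<forall>i\<in>J. x i = x' i"
  then have "restrict x J = restrict x' J" by (intro restrict_ext) simp
  then show "x \<in> {x. restrict x J \<in> Y} \<longleftrightarrow> x' \<in> {x. restrict x J \<in> Y}" by simp
qed

lemma measure_eq_on_seq_space:
  fixes \<mu> \<nu> :: "('i \<Rightarrow> 'a) measure"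
  assumes "sets \<mu> = sets seq_space" "sets \<nu> = sets seq_space" "finite_measure \<mu>"
    and "\<And>J Y. finite J \<Longrightarrow> Y \<subseteq> PiE J (\<lambda>_. UNIV) \<Longrightarrow>
      emeasure \<mu> {x. restrict x J \<in> Y} = emeasure \<nu> {x. restrict x J \<in> Y}"
  shows "\<mu> = \<nu>"
proof (rule measure_eqI_PiM_infinite)
  fix J :: "'i set" and A :: "'i \<Rightarrow> 'a set"
  assume "finite J"
  then show "emeasure \<mu> (prod_emb UNIV (\<lambda>_. count_space UNIV) J (PiE J A)) =
      emeasure \<nu> (prod_emb UNIV (\<lambda>_. count_space UNIV) J (PiE J A))"
    unfolding prod_emb_UNIV_eq_restrict by (intro assms(4)) auto
qed (use assms in \<open>simp_all add: seq_space_def\<close>)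

lemma abs_card_diff_le_card_mismatch:
  assumes "finite S"
  shows "\<bar>real (card {v \<in> S. P v}) - real (card {v \<in> S. Q v})\<bar> \<le> real (card {v \<in> S. \<not> (P v \<longleftrightarrow> Q v)})"
proof -
  have "card {v \<in> S. P v} \<le> card ({v \<in> S. Q v} \<union> {v \<in> S. \<not> (P v \<longleftrightarrow> Q v)})"
    by (rule card_mono) (use assms in auto)
  also have "\<dots> \<le> card {v \<in> S. Q v} + card {v \<in> S. \<not> (P v \<longleftrightarrow> Q v)}" by (rule card_Un_le)
  finally have a: "card {v \<in> S. P v} \<le> card {v \<in> S. Q v} + card {v \<in> S. \<not> (P v \<longleftrightarrow> Q v)}" .
  have "card {v \<in> S. Q v} \<le> card ({v \<in> S. P v} \<union> {v \<in> S. \<not> (P v \<longleftrightarrow> Q v)})"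
    by (rule card_mono) (use assms in auto)
  also have "\<dots> \<le> card {v \<in> S. P v} + card {v \<in> S. \<not> (P v \<longleftrightarrow> Q v)}" by (rule card_Un_le)
  finally have b: "card {v \<in> S. Q v} \<le> card {v \<in> S. P v} + card {v \<in> S. \<not> (P v \<longleftrightarrow> Q v)}" .
  show ?thesis using a b by linarith
qed

lemma LIMSEQ_0_if_eventually_abs_le:
  fixes f e :: "nat \<Rightarrow> real"
  assumes "e \<longlonglongrightarrow> 0" and "\<forall>n\<ge>N. \<bar>f n\<bar> \<le> e n"
  shows "f \<longlonglongrightarrow> 0"
proof (rule Lim_null_comparison)
  show "\<forall>\<^sub>F n in sequentially. norm (f n) \<le> e n"
    using assms(2) by (auto simp: eventually_sequentially)
qed (rule assms(1))

lemma finite_int_set_subset_interval: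
  assumes "finite (W::int set)"
  shows "\<exists>N::nat. W \<subseteq> {- int N..int N}"
  using assms
proof (induction W rule: finite_induct)
  case (insert w W)
  then obtain N where "W \<subseteq> {- int N..int N}" by blast
  then have "insert w W \<subseteq> {- int (max N (nat \<bar>w\<bar>))..int (max N (nat \<bar>w\<bar>))}"
    by (auto simp: subset_iff)
  then show ?case by blast
qed simp

lemma measurable_shiftZ: "shiftZ \<in> measurable seq_space seq_space"
  unfolding shiftZ_def seq_space_def by (rule measurable_PiM_single') (auto simp: space_PiM)

definition window :: "(int \<Rightarrow> 'a) \<Rightarrow> int \<Rightarrow> nat \<Rightarrow> 'a list" where
  "window x j k = map (\<lambda>i. x (j + int i)) [0..<k]"

lemma natext_iff_window: "\<tau> \<in> natext L \<longleftrightarrow> (\<forall>j k. window \<tau> j k \<in> L)"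
  by (simp add: natext_def window_def)

section \<open>Rooted labelled digraphs\<close>

lemma rooted_iso_sym:
  assumes "rooted_iso (V1, E1, o1) (V2, E2, o2)" "o1 \<in> V1"
  shows "rooted_iso (V2, E2, o2) (V1, E1, o1)"
proof -
  from assms obtain f where f: "bij_betw f V1 V2" "f o1 = o2"
    "\<forall>u\<in>V1. \<forall>w\<in>V1. \<forall>a. (u, a, w) \<in> E1 \<longleftrightarrow> (f u, a, f w) \<in> E2"
    unfolding rooted_iso_def by auto
  define g where "g = inv_into V1 f"
  have g: "bij_betw g V2 V1" unfolding g_def by (rule bij_betw_inv_into[OF f(1)])
  have fg: "f (g u) = u" if "u \<in> V2" for u
    using that f(1) unfolding g_def by (simp add: bij_betw_def f_inv_into_f)
  have "g o2 = o1" unfolding g_def using f assms(2) by (metis bij_betw_inv_into_left)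
  moreover have "\<forall>u\<in>V2. \<forall>w\<in>V2. \<forall>a. (u, a, w) \<in> E2 \<longleftrightarrow> (g u, a, g w) \<in> E1"
  proof (intro ballI allI)
    fix u w a assume u: "u \<in> V2" and w: "w \<in> V2"
    have "g u \<in> V1" "g w \<in> V1" using g u w by (auto simp: bij_betw_def)
    then have "(g u, a, g w) \<in> E1 \<longleftrightarrow> (f (g u), a, f (g w)) \<in> E2" using f(3) by blast
    then show "(u, a, w) \<in> E2 \<longleftrightarrow> (g u, a, g w) \<in> E1" using fg u w by simp
  qed
  ultimately show ?thesis using g unfolding rooted_iso_def by auto
qed

lemma rooted_iso_trans:
  assumes "rooted_iso (V1, E1, o1) (V2, E2, o2)" "rooted_iso (V2, E2, o2) (V3, E3, o3)"
  shows "rooted_iso (V1, E1, o1) (V3, E3, o3)"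
proof -
  from assms(1) obtain f where f: "bij_betw f V1 V2" "f o1 = o2"
    "\<forall>u\<in>V1. \<forall>w\<in>V1. \<forall>a. (u, a, w) \<in> E1 \<longleftrightarrow> (f u, a, f w) \<in> E2"
    unfolding rooted_iso_def by auto
  from assms(2) obtain h where h: "bij_betw h V2 V3" "h o2 = o3"
    "\<forall>u\<in>V2. \<forall>w\<in>V2. \<forall>a. (u, a, w) \<in> E2 \<longleftrightarrow> (h u, a, h w) \<in> E3"
    unfolding rooted_iso_def by auto
  have "bij_betw (h \<circ> f) V1 V3" using f(1) h(1) by (rule bij_betw_trans)
  moreover have "(h \<circ> f) o1 = o3" using f h by simp
  moreover have "\<forall>u\<in>V1. \<forall>w\<in>V1. \<forall>a. (u, a, w) \<in> E1 \<longleftrightarrow> ((h \<circ> f) u, a, (h \<circ> f) w) \<in> E3"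
  proof (intro ballI allI)
    fix u w a assume u: "u \<in> V1" and w: "w \<in> V1"
    have "f u \<in> V2" "f w \<in> V2" using f(1) u w by (auto simp: bij_betw_def)
    then show "(u, a, w) \<in> E1 \<longleftrightarrow> ((h \<circ> f) u, a, (h \<circ> f) w) \<in> E3" using f(3) h(3) u w by auto
  qed
  ultimately show ?thesis unfolding rooted_iso_def by auto
qed

lemma rooted_iso_transfer:
  assumes "rooted_iso G1 G2" "snd (snd G1) \<in> fst G1"
  shows "rooted_iso G1 H \<longleftrightarrow> rooted_iso G2 H"
proof -
  obtain V1 E1 o1 where g1: "G1 = (V1, E1, o1)" by (metis prod_cases3)
  obtain V2 E2 o2 where g2: "G2 = (V2, E2, o2)" by (metis prod_cases3)
  obtain V3 E3 o3 where h: "H = (V3, E3, o3)" by (metis prod_cases3)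
  have i12: "rooted_iso (V1, E1, o1) (V2, E2, o2)" using assms g1 g2 by simp
  have o1: "o1 \<in> V1" using assms g1 by simp
  have i21: "rooted_iso (V2, E2, o2) (V1, E1, o1)" by (rule rooted_iso_sym[OF i12 o1])
  show ?thesis unfolding g1 g2 h using rooted_iso_trans i12 i21 by metis
qed

lemma arcs_ball: "fst (snd (ball G v r)) = {(u, a, w) \<in> snd G. u \<in> fst (ball G v r) \<and> w \<in> fst (ball G v r)}"
  by (simp add: ball_def Let_def)

lemma vertices_ball: "fst (ball G v r) = {w \<in> fst G. \<exists>k\<le>r. (v, w) \<in> (adj_rel (snd G)) ^^ k}"
  by (simp add: ball_def Let_def)

lemma root_ball: "snd (snd (ball G v r)) = v"
  by (simp add: ball_def Let_def)

lemma adj_rel_line_graph: "(u, w) \<in> adj_rel (snd (line_graph x)) \<longleftrightarrow> w = u + 1 \<or> w = u - 1"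
  unfolding adj_rel_def line_graph_def by auto

lemma abs_le_if_relpow_adj_line_graph: "(0, j) \<in> (adj_rel (snd (line_graph x))) ^^ m \<Longrightarrow> \<bar>j\<bar> \<le> int m"
proof (induction m arbitrary: j)
  case 0 then show ?case by simp
next
  case (Suc m)
  then obtain u where "(0, u) \<in> (adj_rel (snd (line_graph x))) ^^ m" "(u, j) \<in> adj_rel (snd (line_graph x))"
    by auto
  then have "\<bar>u\<bar> \<le> int m" "j = u + 1 \<or> j = u - 1" using Suc.IH adj_rel_line_graph by auto
  then show ?case by auto
qed

lemma relpow_adj_line_graph_pm:
  "(0, int d) \<in> (adj_rel (snd (line_graph x))) ^^ d \<and> (0, - int d) \<in> (adj_rel (snd (line_graph x))) ^^ d"
proof (induction d)
  case 0 then show ?case by simp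
next
  case (Suc d)
  have "(int d, int (Suc d)) \<in> adj_rel (snd (line_graph x))"
    "(- int d, - int (Suc d)) \<in> adj_rel (snd (line_graph x))"
    by (auto simp: adj_rel_line_graph)
  then show ?case using Suc by (meson relpow_Suc_I)
qed

lemma vertices_ball_line_graph: "fst (ball (line_graph x) 0 r) = {- int r..int r}"
proof -
  have eq: "(\<exists>k\<le>r. (0, j) \<in> (adj_rel (snd (line_graph x))) ^^ k) \<longleftrightarrow> j \<in> {- int r..int r}" for j
  proof
    assume "\<exists>k\<le>r. (0, j) \<in> (adj_rel (snd (line_graph x))) ^^ k"
    then show "j \<in> {- int r..int r}" using abs_le_if_relpow_adj_line_graph by fastforce
  next
    assume j: "j \<in> {- int r..int r}"
    show "\<exists>k\<le>r. (0, j) \<in> (adj_rel (snd (line_graph x))) ^^ k"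
    proof (cases "0 \<le> j")
      case True
      then show ?thesis
        using j relpow_adj_line_graph_pm[of "nat j" x] by (intro exI[of _ "nat j"]) auto
    next
      case False
      then show ?thesis
        using j relpow_adj_line_graph_pm[of "nat (- j)" x] by (intro exI[of _ "nat (- j)"]) auto
    qed
  qed
  have "fst (ball (line_graph x) 0 r) = {j. \<exists>k\<le>r. (0, j) \<in> (adj_rel (snd (line_graph x))) ^^ k}"
    unfolding ball_def Let_def by (simp add: line_graph_def)
  then show ?thesis using eq by blast
qed

lemma ball_line_graph:
  "ball (line_graph x) 0 r = ({- int r..int r}, {(i, x i, i + 1) | i. - int r \<le> i \<and> i < int r}, 0)"
proof -
  have V: "fst (ball (line_graph x) 0 r) = {- int r..int r}" by (rule vertices_ball_line_graph)
  have E: "fst (snd (ball (line_graph x) 0 r)) = {(i, x i, i + 1) | i. - int r \<le> i \<and> i < int r}"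
    unfolding arcs_ball[of "line_graph x"] V by (auto simp: line_graph_def)
  have "snd (snd (ball (line_graph x) 0 r)) = 0" by (rule root_ball)
  then show ?thesis using V E by (metis prod.collapse)
qed

lemma determined_by_rooted_iso_ball_line_graph:
  "determined_by {- int r..<int r} {x. rooted_iso (ball (line_graph x) 0 r) H}"
  unfolding determined_by_def mem_Collect_eq
proof (intro allI impI)
  fix x x' :: "int \<Rightarrow> 'a"
  assume "\<forall>i\<in>{- int r..<int r}. x i = x' i"
  then have "{(i, x i, i + 1) | i. - int r \<le> i \<and> i < int r} = {(i, x' i, i + 1) | i. - int r \<le> i \<and> i < int r}"
    by force
  then show "rooted_iso (ball (line_graph x) 0 r) H \<longleftrightarrow> rooted_iso (ball (line_graph x') 0 r) H"
    by (simp add: ball_line_graph)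
qed

section \<open>Factorial languages and their Rauzy graphs\<close>

text \<open>For the language of a one-sided word, the prefix of length \<open>n\<close> may be the only
  factor of length \<open>n\<close> without left extension.\<close>

locale rauzy_language =
  fixes L :: "'a::finite list set"
  assumes prefix_closed: "u @ v \<in> L \<Longrightarrow> u \<in> L"
    and suffix_closed: "u @ v \<in> L \<Longrightarrow> v \<in> L"
    and right_extendable: "w \<in> L \<Longrightarrow> \<exists>b. w @ [b] \<in> L"
    and card_not_left_extendable: "card {w \<in> L. length w = n \<and> (\<forall>a. a # w \<notin> L)} \<le> 1"
    and Nil_in: "[] \<in> L"
begin

definition words :: "nat \<Rightarrow> 'a list set" where
  "words n = {w \<in> L. length w = n}"

definition p :: "nat \<Rightarrow> nat" where
  "p n = card (words n)"

definition s :: "nat \<Rightarrow> nat" where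
  "s n = p (Suc n) - p n"

text \<open>Choosing one right extension of every factor selects one out-arc at each vertex of the
  Rauzy graph; \<open>advance\<close> follows it.\<close>

definition next_letter :: "'a list \<Rightarrow> 'a" where
  "next_letter w = (SOME b. w @ [b] \<in> L)"

definition extend :: "'a list \<Rightarrow> 'a list" where
  "extend w = w @ [next_letter w]"

definition advance :: "'a list \<Rightarrow> 'a list" where
  "advance w = tl (extend w)"

definition right_special :: "nat \<Rightarrow> 'a list set" where
  "right_special n = {w \<in> words n. \<exists>b. b \<noteq> next_letter w \<and> w @ [b] \<in> L}"

definition left_special :: "nat \<Rightarrow> 'a list set" where
  "left_special n = {w \<in> words n. \<exists>a a'. a \<noteq> a' \<and> a # w \<in> L \<and> a' # w \<in> L}"

definition not_left_extendable :: "nat \<Rightarrow> 'a list set" where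
  "not_left_extendable n = {w \<in> words n. \<forall>a. a # w \<notin> L}"

lemma finite_words [simp]: "finite (words n)"
proof (rule finite_subset)
  show "words n \<subseteq> {xs. set xs \<subseteq> (UNIV::'a set) \<and> length xs = n}"
    by (auto simp: words_def)
qed (use finite_lists_length_eq[of "UNIV::'a set"] in simp)

lemma extend_in_L: "w \<in> L \<Longrightarrow> extend w \<in> L"
  unfolding extend_def next_letter_def using right_extendable by (metis someI_ex)

lemma extend_words: "w \<in> words n \<Longrightarrow> extend w \<in> words (Suc n)"
  using extend_in_L by (auto simp: words_def extend_def)

lemma inj_extend: "inj extend"
  by (auto simp: inj_def extend_def)

lemma words_nonempty: "words n \<noteq> {}"
proof (induction n)
  case 0
  then show ?case using Nil_in by (auto simp: words_def)
next
  case (Suc n)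
  then show ?case using extend_words by blast
qed

lemma p_pos: "0 < p n"
  using words_nonempty[of n] by (simp add: p_def card_gt_0_iff)

lemma advance_words: "w \<in> words n \<Longrightarrow> advance w \<in> words n"
  using extend_in_L suffix_closed[of "[hd (extend w)]" "tl (extend w)"]
  by (auto simp: words_def advance_def extend_def)

lemma funpow_advance_words: "w \<in> words n \<Longrightarrow> (advance ^^ k) w \<in> words n"
  by (induction k) (auto simp: advance_words)

lemma card_not_left_extendable_le_1: "card (not_left_extendable n) \<le> 1"
  using card_not_left_extendable[of n] by (simp add: not_left_extendable_def words_def)

lemma card_extend_image: "card (extend ` words n) = p n"
  unfolding p_def by (rule card_image) (meson inj_extend inj_on_subset subset_UNIV)

lemma p_mono_Suc: "p n \<le> p (Suc n)"
  using card_mono[of "words (Suc n)" "extend ` words n"] extend_words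
  by (auto simp: card_extend_image p_def)

lemma card_words_Suc_diff_extend: "card (words (Suc n) - extend ` words n) = s n"
  using extend_words card_extend_image
  by (subst card_Diff_subset) (auto simp: s_def p_def)

lemma card_le_s_if_inj_into_non_extend:
  assumes "inj_on e S" and "\<And>w. w \<in> S \<Longrightarrow> e w \<in> words (Suc n)"
    and "\<And>w. w \<in> S \<Longrightarrow> e w \<notin> extend ` words n"
  shows "card S \<le> s n"
proof -
  have "e ` S \<subseteq> words (Suc n) - extend ` words n"
    using assms(2,3) by auto
  then show ?thesis
    using assms(1) card_words_Suc_diff_extend
    by (metis card_image card_mono finite_Diff finite_words)
qed

lemma card_right_special: "card (right_special n) \<le> s n"
proof (rule card_le_s_if_inj_into_non_extend)
  define e where "e w = w @ [SOME b. b \<noteq> next_letter w \<and> w @ [b] \<in> L]" for w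
  show "inj_on e (right_special n)"
    by (auto simp: inj_on_def e_def)
  fix w assume w: "w \<in> right_special n"
  let ?b = "SOME b. b \<noteq> next_letter w \<and> w @ [b] \<in> L"
  have "?b \<noteq> next_letter w \<and> w @ [?b] \<in> L"
    using w unfolding right_special_def by (metis (mono_tags, lifting) mem_Collect_eq someI_ex)
  then show "e w \<in> words (Suc n)" "e w \<notin> extend ` words n"
    using w by (auto simp: e_def words_def right_special_def extend_def)
qed

lemma card_words_diff_advance_image: "card (words n - advance ` words n) \<le> s n + 1"
proof -
  define NL where "NL = not_left_extendable n"
  define e where "e u = (SOME a. a # u \<in> L) # u" for u
  have "card ((words n - advance ` words n) - NL) \<le> s n"
  proof (rule card_le_s_if_inj_into_non_extend)
    show "inj_on e ((words n - advance ` words n) - NL)"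
      by (auto simp: inj_on_def e_def)
    fix u assume u: "u \<in> (words n - advance ` words n) - NL"
    then show "e u \<in> words (Suc n)"
      by (auto simp: NL_def not_left_extendable_def e_def words_def intro: someI_ex)
    show "e u \<notin> extend ` words n"
    proof
      assume "e u \<in> extend ` words n"
      then obtain w where "w \<in> words n" "e u = extend w" by auto
      then have "u = advance w" by (metis advance_def e_def list.sel(3))
      then show False using u \<open>w \<in> words n\<close> by auto
    qed
  qed
  moreover have "card (words n - advance ` words n) \<le> card ((words n - advance ` words n) - NL) + card NL"
    by (rule order_trans[OF card_mono card_Un_le]) (auto simp: NL_def not_left_extendable_def)
  moreover note card_not_left_extendable_le_1[of n]
  ultimately show ?thesis unfolding NL_def by linarith
qed

lemma card_left_special: "card (left_special n) \<le> s n + 1"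
proof -
  define NL where "NL = not_left_extendable n"
  define pl where "pl w = (SOME a. a # w \<in> L)" for w
  define e1 where "e1 w = pl w # w" for w
  define e2 where "e2 w = (SOME a'. a' \<noteq> pl w \<and> a' # w \<in> L) # w" for w
  have pl: "pl w # w \<in> L" if "\<exists>a. a # w \<in> L" for w
    using that unfolding pl_def by (rule someI_ex)
  have e2: "hd (e2 w) \<noteq> pl w \<and> e2 w \<in> L" if "w \<in> left_special n" for w
  proof -
    from that obtain a a' where "a \<noteq> a'" "a # w \<in> L" "a' # w \<in> L" by (auto simp: left_special_def)
    then have "\<exists>a'. a' \<noteq> pl w \<and> a' # w \<in> L" by metis
    then show ?thesis unfolding e2_def by (metis (mono_tags, lifting) list.sel(1) someI_ex)
  qed
  have fin: "finite (left_special n)"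
    by (rule finite_subset[of _ "words n"]) (auto simp: left_special_def)
  have "e1 ` (words n - NL) \<union> e2 ` left_special n \<subseteq> words (Suc n)"
    using pl e2 by (auto simp: e1_def e2_def words_def NL_def not_left_extendable_def left_special_def)
  then have "card (e1 ` (words n - NL) \<union> e2 ` left_special n) \<le> p (Suc n)"
    unfolding p_def by (intro card_mono) auto
  moreover have "e1 ` (words n - NL) \<inter> e2 ` left_special n = {}"
    using e2 by (force simp: e1_def e2_def)
  then have "card (e1 ` (words n - NL) \<union> e2 ` left_special n) = card (words n - NL) + card (left_special n)"
    using fin by (simp add: card_Un_disjoint card_image inj_on_def e1_def e2_def)
  moreover have "card (words n - NL) = p n - card NL" "card NL \<le> p n"
    unfolding p_def NL_def not_left_extendable_def by (auto intro!: card_Diff_subset card_mono)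
  moreover note card_not_left_extendable_le_1[of n]
  ultimately show ?thesis unfolding s_def NL_def by linarith
qed

text \<open>Since at most \<open>s n + 1\<close> words are not hit by \<open>advance\<close>, it almost preserves the
  counting measure on \<open>words n\<close>.\<close>

lemma card_advance_preimage:
  assumes "S \<subseteq> words n"
  shows "\<bar>int (card {v \<in> words n. advance v \<in> S}) - int (card S)\<bar> \<le> int (s n) + 1"
proof -
  have low: "card T \<le> card {v \<in> words n. advance v \<in> T} + (s n + 1)" if T: "T \<subseteq> words n" for T
  proof -
    have cover: "T \<subseteq> (words n - advance ` words n) \<union> advance ` {v \<in> words n. advance v \<in> T}"
      using T by auto
    have "card T \<le> card (words n - advance ` words n) + card (advance ` {v \<in> words n. advance v \<in> T})"
      by (rule order_trans[OF card_mono[OF _ cover] card_Un_le]) simp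
    also have "card (advance ` {v \<in> words n. advance v \<in> T}) \<le> card {v \<in> words n. advance v \<in> T}"
      by (rule card_image_le) simp
    finally show ?thesis using card_words_diff_advance_image[of n] by simp
  qed
  have compl: "{v \<in> words n. advance v \<in> words n - S} = words n - {v \<in> words n. advance v \<in> S}"
    using advance_words by auto
  have "card S \<le> card (words n)" "card {v \<in> words n. advance v \<in> S} \<le> card (words n)"
    using assms by (simp_all add: card_mono)
  then show ?thesis
    using low[OF assms] low[of "words n - S"] compl assms
    by (simp add: card_Diff_subset finite_subset)
qed

lemma card_funpow_advance_preimage:
  assumes "S \<subseteq> words n"
  shows "\<bar>int (card {v \<in> words n. (advance ^^ k) v \<in> S}) - int (card S)\<bar> \<le> int k * (int (s n) + 1)"
proof (induction k)
  case 0
  then show ?case using assms by (simp add: Int_absorb1 Collect_conj_eq)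
next
  case (Suc k)
  define T where "T = {v \<in> words n. (advance ^^ k) v \<in> S}"
  have "{v \<in> words n. (advance ^^ Suc k) v \<in> S} = {v \<in> words n. advance v \<in> T}"
    unfolding T_def by (auto simp: funpow_swap1 advance_words)
  moreover have "\<bar>int (card {v \<in> words n. advance v \<in> T}) - int (card T)\<bar> \<le> int (s n) + 1"
    by (rule card_advance_preimage) (auto simp: T_def)
  ultimately show ?case using Suc.IH unfolding T_def by (simp add: algebra_simps)
qed

lemma card_funpow_advance_preimage_le:
  assumes "S \<subseteq> words n"
  shows "card {v \<in> words n. (advance ^^ k) v \<in> S} \<le> card S + k * (s n + 1)"
proof -
  have "int (card {v \<in> words n. (advance ^^ k) v \<in> S}) \<le> int (card S + k * (s n + 1))"
    using card_funpow_advance_preimage[OF assms, of k] by (simp add: abs_le_iff algebra_simps)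
  then show ?thesis by (simp only: of_nat_le_iff)
qed

lemma card_words_diff_funpow_advance_image:
  "card (words n - (advance ^^ k) ` words n) \<le> k * (s n + 1)"
proof -
  define S where "S = words n - (advance ^^ k) ` words n"
  have sub: "S \<subseteq> words n" and empty: "{v \<in> words n. (advance ^^ k) v \<in> S} = {}"
    by (auto simp: S_def)
  have "int (card S) \<le> int (k * (s n + 1))"
    using card_funpow_advance_preimage[OF sub, of k] unfolding empty by (simp add: algebra_simps)
  then show ?thesis by (simp only: S_def of_nat_le_iff)
qed

definition walk_letters :: "'a list \<Rightarrow> nat \<Rightarrow> 'a list" where
  "walk_letters v m = map (\<lambda>k. next_letter ((advance ^^ k) v)) [0..<m]"

lemma drop_append_walk_letters: "drop m (v @ walk_letters v m) = (advance ^^ m) v"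
proof (induction m)
  case 0 then show ?case by (simp add: walk_letters_def)
next
  case (Suc m)
  define u where "u = v @ walk_letters v m"
  define b where "b = next_letter ((advance ^^ m) v)"
  have "drop (Suc m) (v @ walk_letters v (Suc m)) = tl (drop m (u @ [b]))"
    by (simp only: u_def b_def walk_letters_def tl_drop drop_Suc) simp
  also have "drop m (u @ [b]) = (advance ^^ m) v @ [b]"
    using Suc.IH by (simp add: u_def walk_letters_def)
  finally show ?case
    by (simp add: b_def advance_def[of "(advance ^^ m) v"] extend_def)
qed

lemma funpow_advance_eq_drop_append:
  "m \<le> length v \<Longrightarrow> (advance ^^ m) v = drop m v @ walk_letters v m"
  using drop_append_walk_letters[of m v] by simp

lemma append_walk_letters_in_L:
  assumes v: "v \<in> words n" and no_special: "\<forall>k<K. (advance ^^ k) v \<notin> right_special n"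
  shows "v @ walk_letters v K \<in> L"
  using no_special
proof (induction K)
  case 0 then show ?case using v by (simp add: walk_letters_def words_def)
next
  case (Suc K)
  define w where "w = v @ walk_letters v K"
  have wL: "w \<in> L" using Suc by (simp add: w_def)
  then have wb: "w @ [next_letter w] \<in> L" by (rule extend_in_L[unfolded extend_def])
  have "w @ [next_letter w] = take K w @ (drop K w @ [next_letter w])" by simp
  then have "drop K w @ [next_letter w] \<in> L" using wb suffix_closed by metis
  moreover have "drop K w = (advance ^^ K) v" unfolding w_def by (rule drop_append_walk_letters)
  ultimately have "(advance ^^ K) v @ [next_letter w] \<in> L" by simp
  moreover have "(advance ^^ K) v \<notin> right_special n" using Suc.prems by simp
  moreover have "(advance ^^ K) v \<in> words n" using v by (rule funpow_advance_words)
  ultimately have "next_letter w = next_letter ((advance ^^ K) v)"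
    unfolding right_special_def by blast
  then have "v @ walk_letters v (Suc K) = w @ [next_letter w]" by (simp add: w_def walk_letters_def)
  then show ?case using wb by simp
qed

text \<open>The labelling of the line seen from the vertex \<open>v\<close> of \<open>R(n)\<close>: \<open>v\<close> itself is written on
  the positions \<open>-n..-1\<close>, position \<open>i \<ge> 0\<close> carries the label of the \<open>i\<close>-th arc of the
  \<open>advance\<close>-walk from \<open>v\<close>.  Positions left of \<open>-n\<close> are junk.\<close>

definition line_word :: "nat \<Rightarrow> 'a list \<Rightarrow> int \<Rightarrow> 'a" where
  "line_word n v i =
     (if 0 \<le> i then next_letter ((advance ^^ nat i) v)
      else if - int n \<le> i then v ! nat (int n + i) else undefined)"

lemma line_word_advance:
  assumes v: "v \<in> words n" and i: "- int n \<le> i"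
  shows "line_word n (advance v) i = line_word n v (i + 1)"
proof (cases "0 \<le> i")
  case True
  then have "nat (i + 1) = Suc (nat i)" by simp
  then show ?thesis using True by (simp add: line_word_def funpow_swap1)
next
  case False
  define k where "k = nat (int n + i)"
  have lv: "length v = n" using v by (simp add: words_def)
  have k: "k < n" using False i by (simp add: k_def)
  have "line_word n (advance v) i = (advance v) ! k"
    using False i by (simp add: line_word_def k_def)
  also have "\<dots> = (v @ [next_letter v]) ! Suc k"
    using lv k by (simp add: advance_def extend_def nth_tl)
  also have "\<dots> = line_word n v (i + 1)"
  proof (cases "i = -1")
    case True
    then have "Suc k = n" using i by (simp add: k_def)
    then show ?thesis using True lv by (simp add: line_word_def nth_append)
  next
    case False2: False
    then have "\<not> 0 \<le> i + 1" "- int n \<le> i + 1" using False i by auto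
    moreover have "nat (int n + (i + 1)) = Suc k" using False2 False i by (simp add: k_def)
    moreover have "Suc k < n" using False2 False i by (simp add: k_def)
    ultimately show ?thesis using k lv by (simp add: line_word_def nth_append)
  qed
  finally show ?thesis .
qed

lemma line_word_eq_nth_walk:
  assumes v: "v \<in> words n" and i: "- int n \<le> i" "i < int K"
  shows "line_word n v i = (v @ walk_letters v K) ! nat (int n + i)"
proof -
  have lv: "length v = n" using v by (simp add: words_def)
  show ?thesis
  proof (cases "0 \<le> i")
    case True
    then have "nat (int n + i) = n + nat i" by simp
    then show ?thesis using True i lv by (simp add: line_word_def nth_append walk_letters_def)
  next
    case False
    then have "nat (int n + i) < n" using i by simp
    then show ?thesis using False i lv by (simp add: line_word_def nth_append)
  qed
qed

lemma take_drop_in_L: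
  assumes "u \<in> L" shows "take k (drop j u) \<in> L"
proof -
  have "u = take j u @ (take k (drop j u) @ drop k (drop j u))" by (metis append_take_drop_id)
  then show ?thesis using assms prefix_closed suffix_closed by metis
qed

lemma window_line_word_in_L:
  assumes v: "v \<in> words n" and j: "- int n \<le> j"
    and no_special: "\<forall>k'<nat (j + int k). (advance ^^ k') v \<notin> right_special n"
  shows "window (line_word n v) j k \<in> L"
proof -
  define K where "K = nat (j + int k)"
  have lv: "length v = n" using v by (simp add: words_def)
  define u where "u = v @ walk_letters v K"
  have wL: "u \<in> L" using append_walk_letters_in_L[OF v] no_special by (simp add: K_def u_def)
  have len: "length u = n + K" using lv by (simp add: walk_letters_def u_def)
  have "window (line_word n v) j k = take k (drop (nat (int n + j)) u)"
  proof (rule nth_equalityI)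
    show "length (window (line_word n v) j k) = length (take k (drop (nat (int n + j)) u))"
      using len j by (simp add: window_def K_def)
  next
    fix i assume "i < length (window (line_word n v) j k)"
    then have i: "i < k" by (simp add: window_def)
    have "window (line_word n v) j k ! i = line_word n v (j + int i)"
      using i by (simp add: window_def)
    also have "\<dots> = u ! nat (int n + (j + int i))"
      unfolding u_def by (rule line_word_eq_nth_walk[OF v]) (use j i in \<open>auto simp: K_def\<close>)
    also have "\<dots> = take k (drop (nat (int n + j)) u) ! i"
    proof -
      have "nat (int n + (j + int i)) = nat (int n + j) + i" using j by simp
      moreover have "nat (int n + j) + i < length u" using len i j by (simp add: K_def)
      ultimately show ?thesis using i by (simp add: nth_take nth_drop)
    qed
    finally show "window (line_word n v) j k ! i = take k (drop (nat (int n + j)) u) ! i" .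
  qed
  then show ?thesis using take_drop_in_L[OF wL] by simp
qed

lemma card_window_line_word_notin_L:
  assumes j: "- int n \<le> j"
  shows "card {v \<in> words n. window (line_word n v) j k \<notin> L}
    \<le> nat (j + int k) * (nat (j + int k) + 1) * (s n + 1)"
proof -
  define K where "K = nat (j + int k)"
  have "{v \<in> words n. window (line_word n v) j k \<notin> L}
      \<subseteq> (\<Union>k'\<in>{..<K}. {v \<in> words n. (advance ^^ k') v \<in> right_special n})"
    using window_line_word_in_L[OF _ j] unfolding K_def by blast
  then have "card {v \<in> words n. window (line_word n v) j k \<notin> L}
      \<le> card (\<Union>k'\<in>{..<K}. {v \<in> words n. (advance ^^ k') v \<in> right_special n})"
    by (intro card_mono) auto
  also have "\<dots> \<le> (\<Sum>k'\<in>{..<K}. card {v \<in> words n. (advance ^^ k') v \<in> right_special n})"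
    by (rule card_UN_le) simp
  also have "\<dots> \<le> (\<Sum>k'\<in>{..<K}. s n + K * (s n + 1))"
  proof (rule sum_mono)
    fix k' assume "k' \<in> {..<K}"
    then have "k' * (s n + 1) \<le> K * (s n + 1)" by (intro mult_le_mono1) simp
    moreover have "card {v \<in> words n. (advance ^^ k') v \<in> right_special n}
        \<le> card (right_special n) + k' * (s n + 1)"
      by (rule card_funpow_advance_preimage_le) (auto simp: right_special_def)
    ultimately show "card {v \<in> words n. (advance ^^ k') v \<in> right_special n} \<le> s n + K * (s n + 1)"
      using card_right_special[of n] by linarith
  qed
  also have "\<dots> \<le> K * (K + 1) * (s n + 1)" by (simp add: algebra_simps)
  finally show ?thesis by (simp add: K_def)
qed

lemma vertices_rauzy: "fst (rauzy L n) = words n" by (simp add: rauzy_def words_def)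

lemma arc_rauzy_iff: "(u, b, w) \<in> snd (rauzy L n) \<longleftrightarrow>
   (\<exists>a u'. u = a # u' \<and> w = u' @ [b] \<and> a # u' @ [b] \<in> L \<and> length u' + 1 = n)"
  by (auto simp: rauzy_def)

lemma advance_arc:
  assumes u: "u \<in> words n" and n: "1 \<le> n"
  shows "(u, next_letter u, advance u) \<in> snd (rauzy L n)"
proof -
  have lu: "length u = n" using u by (simp add: words_def)
  then have ue: "u = hd u # tl u" using n by (cases u) auto
  have "u @ [next_letter u] \<in> L" using u extend_in_L[of u] by (simp add: words_def extend_def)
  then have "hd u # tl u @ [next_letter u] \<in> L" using ue by (metis append_Cons)
  moreover have "advance u = tl u @ [next_letter u]"
    using ue by (metis advance_def extend_def list.sel(3) append_Cons)
  ultimately show ?thesis unfolding arc_rauzy_iff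
    by (intro exI[of _ "hd u"] exI[of _ "tl u"]) (use lu ue n in auto)
qed

lemma arc_from_not_right_special:
  assumes u: "u \<in> words n" "u \<notin> right_special n" and e: "(u, b, w) \<in> snd (rauzy L n)"
  shows "b = next_letter u \<and> w = advance u"
proof -
  from e obtain a u' where au: "u = a # u'" "w = u' @ [b]" "a # u' @ [b] \<in> L"
    unfolding arc_rauzy_iff by blast
  then have "u @ [b] \<in> L" by simp
  then have b: "b = next_letter u" using u unfolding right_special_def by blast
  then show ?thesis using au by (simp add: advance_def extend_def)
qed

lemma arc_into_advance_not_left_special:
  assumes u: "u \<in> words n" and n: "1 \<le> n" and nls: "advance u \<notin> left_special n"
    and e: "(y, b, advance u) \<in> snd (rauzy L n)"
  shows "y = u \<and> b = next_letter u"
proof -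
  have lu: "length u = n" using u by (simp add: words_def)
  then have ue: "u = hd u # tl u" using n by (cases u) auto
  have sgu: "advance u = tl u @ [next_letter u]"
    using ue by (metis advance_def extend_def list.sel(3) append_Cons)
  from e obtain a u'' where au: "y = a # u''" "advance u = u'' @ [b]" "a # u'' @ [b] \<in> L"
    unfolding arc_rauzy_iff by blast
  have "a # advance u \<in> L" using au by simp
  moreover have "hd u # advance u \<in> L"
  proof -
    have "u @ [next_letter u] = hd u # advance u" using sgu lu n by (cases u) auto
    then show ?thesis using extend_in_L[of u] u by (simp add: words_def extend_def)
  qed
  moreover have "advance u \<in> words n" using u by (rule advance_words)
  ultimately have "a = hd u" using nls unfolding left_special_def by blast
  moreover have "u'' = tl u" "b = next_letter u" using au(2) sgu by auto
  ultimately show ?thesis using au ue by simp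
qed

abbreviation orbit :: "'a list \<Rightarrow> nat \<Rightarrow> 'a list" where
  "orbit z k \<equiv> (advance ^^ k) z"

text \<open>If \<open>z\<close> is a regular start, the \<open>r\<close>-ball of \<open>R(n)\<close> around \<open>orbit z (r + 1)\<close> is the path
  \<open>orbit z 1, \<dots>, orbit z (2 * r + 1)\<close>.\<close>

definition regular_start :: "nat \<Rightarrow> nat \<Rightarrow> 'a list set" where
  "regular_start n r = {z \<in> words n.
     (\<forall>k \<le> 2*r+2. orbit z k \<notin> right_special n \<and> orbit z k \<notin> left_special n) \<and>
     inj_on (\<lambda>k. orbit z k) {..2*r+2}}"

lemma adj_rel_rauzy_orbit:
  assumes z: "z \<in> regular_start n r" and n: "1 \<le> n" and k: "1 \<le> k" "k \<le> 2*r+1"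
  shows "(orbit z k, w) \<in> adj_rel (snd (rauzy L n)) \<longleftrightarrow> w = orbit z (Suc k) \<or> w = orbit z (k - 1)"
proof -
  have zL: "z \<in> words n" using z by (simp add: regular_start_def)
  have gk: "orbit z k \<in> words n" "orbit z k \<notin> right_special n" "orbit z k \<notin> left_special n"
    using z k zL funpow_advance_words by (auto simp: regular_start_def)
  have km: "orbit z k = advance (orbit z (k - 1))"
    using k by (metis Suc_diff_le diff_Suc_1 funpow.simps(2) o_apply)
  have gkm: "orbit z (k - 1) \<in> words n" using zL funpow_advance_words by blast
  show ?thesis
  proof
    assume "(orbit z k, w) \<in> adj_rel (snd (rauzy L n))"
    then obtain a where "(orbit z k, a, w) \<in> snd (rauzy L n) \<or> (w, a, orbit z k) \<in> snd (rauzy L n)"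
      unfolding adj_rel_def by auto
    then show "w = orbit z (Suc k) \<or> w = orbit z (k - 1)"
    proof
      assume "(orbit z k, a, w) \<in> snd (rauzy L n)"
      then have "w = advance (orbit z k)" using arc_from_not_right_special gk by blast
      then show ?thesis by simp
    next
      assume "(w, a, orbit z k) \<in> snd (rauzy L n)"
      then have "(w, a, advance (orbit z (k - 1))) \<in> snd (rauzy L n)" using km by simp
      then have "w = orbit z (k - 1)"
        using arc_into_advance_not_left_special[OF gkm n] gk km by auto
      then show ?thesis by simp
    qed
  next
    assume "w = orbit z (Suc k) \<or> w = orbit z (k - 1)"
    then show "(orbit z k, w) \<in> adj_rel (snd (rauzy L n))"
    proof
      assume "w = orbit z (Suc k)"
      then show ?thesis using advance_arc[OF gk(1) n] unfolding adj_rel_def by auto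
    next
      assume "w = orbit z (k - 1)"
      then show ?thesis using advance_arc[OF gkm n] km unfolding adj_rel_def by auto
    qed
  qed
qed

lemma relpow_adj_rauzy_orbit_imp:
  assumes z: "z \<in> regular_start n r" and n: "1 \<le> n"
  shows "m \<le> r \<Longrightarrow> (orbit z (r+1), w) \<in> (adj_rel (snd (rauzy L n))) ^^ m \<Longrightarrow>
    \<exists>k. w = orbit z k \<and> r + 1 \<le> k + m \<and> k \<le> r + 1 + m"
proof (induction m arbitrary: w)
  case 0 then show ?case by (intro exI[of _ "r+1"]) auto
next
  case (Suc m)
  then obtain u where u: "(orbit z (r+1), u) \<in> (adj_rel (snd (rauzy L n))) ^^ m"
    "(u, w) \<in> adj_rel (snd (rauzy L n))" by auto
  from Suc.IH[OF _ u(1)] Suc.prems obtain k where k: "u = orbit z k" "r + 1 \<le> k + m" "k \<le> r + 1 + m"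
    by auto
  then have "1 \<le> k" "k \<le> 2*r+1" using Suc.prems by auto
  then have "w = orbit z (Suc k) \<or> w = orbit z (k - 1)"
    using adj_rel_rauzy_orbit[OF z n] u(2) k(1) by blast
  then show ?case
  proof
    assume "w = orbit z (Suc k)" then show ?thesis using k by (intro exI[of _ "Suc k"]) auto
  next
    assume "w = orbit z (k - 1)" then show ?thesis using k \<open>1 \<le> k\<close> by (intro exI[of _ "k - 1"]) auto
  qed
qed

lemma relpow_adj_rauzy_orbit:
  assumes zL: "z \<in> words n" and n: "1 \<le> n"
  shows "d \<le> r + 1 \<Longrightarrow> (orbit z (r+1), orbit z (r+1+d)) \<in> (adj_rel (snd (rauzy L n))) ^^ d \<and>
      (orbit z (r+1), orbit z (r+1-d)) \<in> (adj_rel (snd (rauzy L n))) ^^ d"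
proof (induction d)
  case 0 then show ?case by simp
next
  case (Suc d)
  have a1: "(orbit z (r+1+d), orbit z (r+1+Suc d)) \<in> adj_rel (snd (rauzy L n))"
    using advance_arc[OF funpow_advance_words[OF zL] n, of "r+1+d"] unfolding adj_rel_def by auto
  have e: "orbit z (r+1-d) = advance (orbit z (r+1-Suc d))" using Suc.prems
    by (metis Suc_diff_Suc Suc_le_lessD funpow.simps(2) o_apply)
  have a2: "(orbit z (r+1-d), orbit z (r+1-Suc d)) \<in> adj_rel (snd (rauzy L n))"
    using advance_arc[OF funpow_advance_words[OF zL] n, of "r+1-Suc d"] e
      unfolding adj_rel_def by auto
  show ?case using Suc a1 a2 by (meson Suc_leD relpow_Suc_I)
qed

lemma vertices_ball_rauzy_orbit:
  assumes z: "z \<in> regular_start n r" and n: "1 \<le> n"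
  shows "fst (ball (rauzy L n) (orbit z (r+1)) r) = orbit z ` {1..2*r+1}"
proof -
  have zL: "z \<in> words n" using z by (simp add: regular_start_def)
  show ?thesis
  proof (rule set_eqI)
    fix w
    show "w \<in> fst (ball (rauzy L n) (orbit z (r+1)) r) \<longleftrightarrow> w \<in> orbit z ` {1..2*r+1}"
    proof
      assume "w \<in> fst (ball (rauzy L n) (orbit z (r+1)) r)"
      then obtain m where "m \<le> r" "(orbit z (r+1), w) \<in> (adj_rel (snd (rauzy L n))) ^^ m"
        unfolding vertices_ball by auto
      then obtain k where "w = orbit z k" "r + 1 \<le> k + m" "k \<le> r + 1 + m"
        using relpow_adj_rauzy_orbit_imp[OF z n] by blast
      then show "w \<in> orbit z ` {1..2*r+1}" using \<open>m \<le> r\<close> by auto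
    next
      assume "w \<in> orbit z ` {1..2*r+1}"
      then obtain k where k: "w = orbit z k" "1 \<le> k" "k \<le> 2*r+1" by auto
      have wL: "w \<in> words n" using k funpow_advance_words[OF zL] by simp
      show "w \<in> fst (ball (rauzy L n) (orbit z (r+1)) r)"
      proof (cases "r + 1 \<le> k")
        case True
        define d where "d = k - (r+1)"
        have "d \<le> r + 1" "k = r + 1 + d" using k True by (auto simp: d_def)
        then show ?thesis
          using relpow_adj_rauzy_orbit[OF zL n, of d r] wL k unfolding vertices_ball vertices_rauzy
          using \<open>d \<le> r + 1\<close> k(3) by (intro CollectI conjI exI[of _ d]) auto
      next
        case False
        define d where "d = (r+1) - k"
        have "d \<le> r + 1" "k = r + 1 - d" "d \<le> r" using k False by (auto simp: d_def)
        then show ?thesis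
          using relpow_adj_rauzy_orbit[OF zL n, of d r] wL k unfolding vertices_ball vertices_rauzy
          by (intro CollectI conjI exI[of _ d]) auto
      qed
    qed
  qed
qed

lemma arc_ball_rauzy_orbit_iff:
  assumes z: "z \<in> regular_start n r" and n: "1 \<le> n" and k: "k \<in> {1..2*r+1}" and k': "k' \<in> {1..2*r+1}"
  shows "(orbit z k, a, orbit z k') \<in> fst (snd (ball (rauzy L n) (orbit z (r+1)) r))
    \<longleftrightarrow> a = next_letter (orbit z k) \<and> k' = Suc k"
proof -
  have zL: "z \<in> words n" using z by (simp add: regular_start_def)
  have inj: "inj_on (orbit z) {..2*r+2}" using z by (simp add: regular_start_def)
  have gk: "orbit z k \<in> words n" "orbit z k \<notin> right_special n"
    using z k funpow_advance_words[OF zL] by (auto simp: regular_start_def)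
  have m1: "orbit z k \<in> fst (ball (rauzy L n) (orbit z (r+1)) r)"
    "orbit z k' \<in> fst (ball (rauzy L n) (orbit z (r+1)) r)"
    unfolding vertices_ball_rauzy_orbit[OF z n] using k k' by blast+
  have "(orbit z k, a, orbit z k') \<in> fst (snd (ball (rauzy L n) (orbit z (r+1)) r)) \<longleftrightarrow>
        (orbit z k, a, orbit z k') \<in> snd (rauzy L n)"
    unfolding arcs_ball[of "rauzy L n"] using m1 by blast
  also have "\<dots> \<longleftrightarrow> a = next_letter (orbit z k) \<and> orbit z k' = advance (orbit z k)"
  proof
    assume "(orbit z k, a, orbit z k') \<in> snd (rauzy L n)"
    then show "a = next_letter (orbit z k) \<and> orbit z k' = advance (orbit z k)"
      by (rule arc_from_not_right_special[OF gk])
  next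
    assume "a = next_letter (orbit z k) \<and> orbit z k' = advance (orbit z k)"
    then show "(orbit z k, a, orbit z k') \<in> snd (rauzy L n)" using advance_arc[OF gk(1) n] by simp
  qed
  also have "orbit z k' = advance (orbit z k) \<longleftrightarrow> k' = Suc k"
  proof
    assume h: "orbit z k' = advance (orbit z k)"
    have "orbit z k' = orbit z (Suc k)" using h by simp
    moreover have "k' \<in> {..2*r+2}" "Suc k \<in> {..2*r+2}" using k k' by auto
    ultimately show "k' = Suc k" using inj_onD[OF inj, of k' "Suc k"] by simp
  qed simp
  finally show ?thesis .
qed

lemma line_word_orbit:
  assumes zL: "z \<in> words n" and rn: "r + 1 \<le> n" and i: "- int r \<le> i" "i < int r"
  shows "line_word n (orbit z (r+1)) i = next_letter (orbit z (nat (i + int r + 1)))"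
proof (cases "0 \<le> i")
  case True
  have fa: "(advance ^^ nat i) (orbit z (r+1)) = (advance ^^ (nat i + (r+1))) z"
    by (simp only: funpow_add comp_def)
  have "line_word n (orbit z (r+1)) i = next_letter ((advance ^^ nat i) (orbit z (r+1)))"
    using True by (simp only: line_word_def if_True)
  then have "line_word n (orbit z (r+1)) i = next_letter ((advance ^^ (nat i + (r+1))) z)"
    using fa by simp
  moreover have "nat i + (r+1) = nat (i + int r + 1)" using True by simp
  ultimately show ?thesis by (simp only:)
next
  case False
  have lz: "length z = n" using zL by (simp add: words_def)
  have w: "orbit z (r+1) = drop (r+1) z @ walk_letters z (r+1)"
    using funpow_advance_eq_drop_append[of "r+1" z] lz rn by simp
  have "line_word n (orbit z (r+1)) i = orbit z (r+1) ! nat (int n + i)"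
    using False i rn by (simp add: line_word_def)
  also have "\<dots> = walk_letters z (r+1) ! (nat (int n + i) - (n - (r+1)))"
  proof -
    have "n - (r+1) \<le> nat (int n + i)" using i rn by arith
    then show ?thesis using w lz by (simp add: nth_append)
  qed
  also have "nat (int n + i) - (n - (r+1)) = nat (i + int r + 1)" using False i rn by simp
  also have "walk_letters z (r+1) ! nat (i + int r + 1) = next_letter (orbit z (nat (i + int r + 1)))"
  proof -
    have "nat (i + int r + 1) < r + 1" using False i by arith
    then show ?thesis by (simp add: walk_letters_def del: upt_Suc)
  qed
  finally show ?thesis .
qed

lemma bij_betw_orbit_centered:
  assumes "z \<in> regular_start n r"
  shows "bij_betw (\<lambda>i. orbit z (nat (i + int r + 1))) {- int r..int r} (orbit z ` {1..2*r+1})"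
proof -
  have "inj_on (orbit z) {1..2*r+1}"
    using assms by (auto simp: regular_start_def intro: inj_on_subset)
  then have "bij_betw (orbit z) {1..2*r+1} (orbit z ` {1..2*r+1})"
    by (simp add: inj_on_imp_bij_betw)
  moreover have "bij_betw (\<lambda>i. nat (i + int r + 1)) {- int r..int r} {1..2*r+1}"
  proof (rule bij_betw_imageI)
    show "inj_on (\<lambda>i. nat (i + int r + 1)) {- int r..int r}"
      by (auto simp: inj_on_def)
    show "(\<lambda>i. nat (i + int r + 1)) ` {- int r..int r} = {1..2*r+1}"
    proof (intro set_eqI iffI)
      fix k assume "k \<in> {1..2*r+1}"
      then show "k \<in> (\<lambda>i. nat (i + int r + 1)) ` {- int r..int r}"
        by (intro image_eqI[of _ _ "int k - int r - 1"]) auto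
    qed auto
  qed
  ultimately show ?thesis
    using bij_betw_trans[of "\<lambda>i. nat (i + int r + 1)" _ _ "orbit z"] by (simp add: comp_def)
qed

lemma arc_ball_rauzy_orbit_centered_iff:
  assumes z: "z \<in> regular_start n r" and rn: "2*r+2 \<le> n"
    and i: "i \<in> {- int r..int r}" and j: "j \<in> {- int r..int r}"
  shows "(orbit z (nat (i + int r + 1)), a, orbit z (nat (j + int r + 1)))
      \<in> fst (snd (ball (rauzy L n) (orbit z (r+1)) r))
    \<longleftrightarrow> j = i + 1 \<and> a = line_word n (orbit z (r+1)) i"
proof -
  have n: "1 \<le> n" using rn by simp
  have k: "nat (i + int r + 1) \<in> {1..2*r+1}" "nat (j + int r + 1) \<in> {1..2*r+1}"
    using i j by auto
  have "(orbit z (nat (i + int r + 1)), a, orbit z (nat (j + int r + 1)))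
      \<in> fst (snd (ball (rauzy L n) (orbit z (r+1)) r))
    \<longleftrightarrow> a = next_letter (orbit z (nat (i + int r + 1))) \<and> nat (j + int r + 1) = Suc (nat (i + int r + 1))"
    by (rule arc_ball_rauzy_orbit_iff[OF z n k])
  also have "\<dots> \<longleftrightarrow> j = i + 1 \<and> a = line_word n (orbit z (r+1)) i"
  proof -
    have "j = i + 1 \<Longrightarrow> line_word n (orbit z (r+1)) i = next_letter (orbit z (nat (i + int r + 1)))"
      using z rn i j by (intro line_word_orbit) (auto simp: regular_start_def)
    then show ?thesis using i j by auto
  qed
  finally show ?thesis .
qed

lemma ball_line_word_iso_ball_rauzy:
  assumes z: "z \<in> regular_start n r" and rn: "2*r+2 \<le> n"
  shows "rooted_iso (ball (line_graph (line_word n (orbit z (r+1)))) 0 r)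
    (ball (rauzy L n) (orbit z (r+1)) r)"
proof -
  define f where "f = (\<lambda>i. orbit z (nat (i + int r + 1)))"
  define x where "x = line_word n (orbit z (r+1))"
  obtain V E root where ball: "ball (rauzy L n) (orbit z (r+1)) r = (V, E, root)"
    by (metis prod_cases3)
  have "1 \<le> n" using rn by simp
  then have "V = orbit z ` {1..2*r+1}"
    using vertices_ball_rauzy_orbit[OF z] ball by simp
  then have "bij_betw f {- int r..int r} V"
    using bij_betw_orbit_centered[OF z] by (simp add: f_def)
  moreover have "f 0 = root"
  proof -
    have "nat (int r + 1) = r + 1" by simp
    then show ?thesis using root_ball[of "rauzy L n" "orbit z (r+1)" r] ball by (simp add: f_def)
  qed
  moreover have "(i, a, j) \<in> {(i, x i, i + 1) | i. - int r \<le> i \<and> i < int r} \<longleftrightarrow> (f i, a, f j) \<in> E"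
    if "i \<in> {- int r..int r}" "j \<in> {- int r..int r}" for i j a
    using arc_ball_rauzy_orbit_centered_iff[OF z rn that, of a] that ball by (auto simp: f_def x_def)
  ultimately show ?thesis
    unfolding rooted_iso_def ball_line_graph ball x_def[symmetric] by auto
qed

definition periodic_words :: "nat \<Rightarrow> nat \<Rightarrow> 'a list set" where
  "periodic_words n l = {u \<in> words n. (advance ^^ l) u = u}"

lemma periodic_words_nth:
  assumes u: "u \<in> periodic_words n l" and l: "l \<le> n" and k: "k + l < n"
  shows "u ! k = u ! (k + l)"
proof -
  have lu: "length u = n" using u by (simp add: periodic_words_def words_def)
  have "u = drop l u @ walk_letters u l"
    using u funpow_advance_eq_drop_append[of l u] lu l by (simp add: periodic_words_def)
  then have "u ! k = (drop l u @ walk_letters u l) ! k" by simp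
  also have "\<dots> = u ! (k + l)"
  proof -
    have "k < n - l" using k by simp
    then show ?thesis using lu by (simp add: nth_append add.commute)
  qed
  finally show ?thesis .
qed

lemma card_periodic_words:
  assumes l: "1 \<le> l" "l \<le> n"
  shows "card (periodic_words n l) \<le> CARD('a) ^ l"
proof -
  have inj: "inj_on (take l) (periodic_words n l)"
  proof (rule inj_onI)
    fix u u' assume u: "u \<in> periodic_words n l" and u': "u' \<in> periodic_words n l" and t: "take l u = take l u'"
    have lu: "length u = n" "length u' = n" using u u' by (auto simp: periodic_words_def words_def)
    have "\<forall>k. k < n \<longrightarrow> u ! k = u' ! k"
    proof (intro allI)
      fix k show "k < n \<longrightarrow> u ! k = u' ! k"
      proof (induction k rule: less_induct)
        case (less k)
        show ?case
        proof (cases "k < l")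
          case True
          then show ?thesis using t by (metis nth_take)
        next
          case False
          then have "k - l < k" "k - l + l = k" using l by auto
          then show ?thesis
            using less periodic_words_nth[OF u l(2), of "k - l"] periodic_words_nth[OF u' l(2), of "k - l"]
            by auto
        qed
      qed
    qed
    then show "u = u'" using lu by (intro nth_equalityI) auto
  qed
  have "take l ` periodic_words n l \<subseteq> {xs. set xs \<subseteq> (UNIV::'a set) \<and> length xs = l}"
    using l by (auto simp: periodic_words_def words_def)
  then have "card (take l ` periodic_words n l) \<le> card {xs. set xs \<subseteq> (UNIV::'a set) \<and> length xs = l}"
    by (intro card_mono) (use finite_lists_length_eq[of "UNIV::'a set" l] in auto)
  also have "\<dots> = CARD('a) ^ l" using card_lists_length_eq[of "UNIV::'a set" l] by simp
  finally show ?thesis using card_image[OF inj] by simp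
qed

lemma not_regular_startE:
  assumes "z \<in> words n" "z \<notin> regular_start n r"
  obtains k where "k \<le> 2*r+2" "orbit z k \<in> right_special n \<union> left_special n"
  | i j where "i < j" "j \<le> 2*r+2" "orbit z i \<in> periodic_words n (j - i)"
proof (cases "\<forall>k \<le> 2*r+2. orbit z k \<notin> right_special n \<union> left_special n")
  case True
  then have "\<not> inj_on (orbit z) {..2*r+2}"
    using assms by (auto simp: regular_start_def)
  then obtain i j where "i \<le> 2*r+2" "j \<le> 2*r+2" "i \<noteq> j" "orbit z i = orbit z j"
    unfolding inj_on_def by auto
  then obtain i j where ij: "i < j" "j \<le> 2*r+2" "orbit z i = orbit z j"
    by (metis linorder_neqE_nat)
  have "(advance ^^ (j - i)) (orbit z i) = (advance ^^ (j - i + i)) z"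
    by (simp only: funpow_add comp_def)
  then have "(advance ^^ (j - i)) (orbit z i) = orbit z j"
    using ij(1) by simp
  then have "orbit z i \<in> periodic_words n (j - i)"
    using ij(3) assms(1) funpow_advance_words by (auto simp: periodic_words_def)
  then show thesis using ij that(2) by blast
qed (use that(1) in blast)

lemma card_orbit_special:
  assumes "k \<le> m"
  shows "card {z \<in> words n. orbit z k \<in> right_special n \<union> left_special n} \<le> (m + 2) * (s n + 1)"
proof -
  have "card {z \<in> words n. orbit z k \<in> right_special n \<union> left_special n}
      \<le> card (right_special n \<union> left_special n) + k * (s n + 1)"
    by (rule card_funpow_advance_preimage_le) (auto simp: right_special_def left_special_def)
  also have "card (right_special n \<union> left_special n) \<le> card (right_special n) + card (left_special n)"
    by (rule card_Un_le)
  also have "k * (s n + 1) \<le> m * (s n + 1)"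
    using assms by (rule mult_le_mono1)
  finally show ?thesis
    using card_right_special[of n] card_left_special[of n] by (simp add: algebra_simps)
qed

lemma card_orbit_periodic:
  assumes "i < j" "j \<le> m" "m \<le> n"
  shows "card {z \<in> words n. orbit z i \<in> periodic_words n (j - i)} \<le> (CARD('a) ^ m + m) * (s n + 1)"
proof -
  have "card {z \<in> words n. orbit z i \<in> periodic_words n (j - i)}
      \<le> card (periodic_words n (j - i)) + i * (s n + 1)"
    by (rule card_funpow_advance_preimage_le) (auto simp: periodic_words_def)
  also have "card (periodic_words n (j - i)) \<le> CARD('a) ^ (j - i)"
    using assms by (intro card_periodic_words) auto
  also have "CARD('a) ^ (j - i) \<le> CARD('a) ^ m"
    using assms by (intro power_increasing) auto
  also have "i * (s n + 1) \<le> m * (s n + 1)"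
    using assms by (intro mult_le_mono1) simp
  finally show ?thesis by (simp add: algebra_simps)
qed

definition irregular_const :: "nat \<Rightarrow> nat" where
  "irregular_const r = (2*r+3) * (2*r+4) + (2*r+3) * (2*r+3) * (CARD('a) ^ (2*r+2) + (2*r+2))"

lemma card_not_regular_start:
  assumes rn: "2*r+2 \<le> n"
  shows "card (words n - regular_start n r) \<le> irregular_const r * (s n + 1)"
proof -
  define K where "K = {..2*r+2}"
  define A where "A k = {z \<in> words n. orbit z k \<in> right_special n \<union> left_special n}" for k
  define B where "B ij = {z \<in> words n. fst ij < snd ij \<and> orbit z (fst ij) \<in> periodic_words n (snd ij - fst ij)}"
    for ij
  have fK: "finite K" by (simp add: K_def)
  have cover: "words n - regular_start n r \<subseteq> (\<Union>k\<in>K. A k) \<union> (\<Union>ij\<in>K \<times> K. B ij)"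
  proof
    fix z assume z: "z \<in> words n - regular_start n r"
    then show "z \<in> (\<Union>k\<in>K. A k) \<union> (\<Union>ij\<in>K \<times> K. B ij)"
    proof (elim DiffE not_regular_startE)
      fix k assume "k \<le> 2*r+2" "orbit z k \<in> right_special n \<union> left_special n"
      then have "z \<in> A k" "k \<in> K" using z by (auto simp: A_def K_def)
      then show ?thesis by blast
    next
      fix i j assume "i < j" "j \<le> 2*r+2" "orbit z i \<in> periodic_words n (j - i)"
      then have "z \<in> B (i, j)" "(i, j) \<in> K \<times> K" using z by (auto simp: B_def K_def)
      then show ?thesis by blast
    qed
  qed
  have A: "card (A k) \<le> (2*r+2 + 2) * (s n + 1)" if "k \<in> K" for k
    unfolding A_def by (rule card_orbit_special) (use that in \<open>simp add: K_def\<close>)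
  have B: "card (B ij) \<le> (CARD('a) ^ (2*r+2) + (2*r+2)) * (s n + 1)" if "ij \<in> K \<times> K" for ij
  proof (cases "fst ij < snd ij")
    case True
    have "snd ij \<le> 2*r+2" using that by (auto simp: K_def)
    moreover have "B ij = {z \<in> words n. orbit z (fst ij) \<in> periodic_words n (snd ij - fst ij)}"
      using True by (simp add: B_def)
    ultimately show ?thesis using card_orbit_periodic[OF True _ rn] by simp
  qed (simp add: B_def)
  have "card (words n - regular_start n r) \<le> card (\<Union>k\<in>K. A k) + card (\<Union>ij\<in>K \<times> K. B ij)"
    by (rule order_trans[OF card_mono[OF _ cover] card_Un_le]) (simp add: A_def B_def fK)
  also have "card (\<Union>k\<in>K. A k) \<le> (\<Sum>k\<in>K. card (A k))"
    by (rule card_UN_le[OF fK])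
  also have "\<dots> \<le> (\<Sum>k\<in>K. (2*r+2 + 2) * (s n + 1))"
    by (rule sum_mono) (rule A)
  also have "card (\<Union>ij\<in>K \<times> K. B ij) \<le> (\<Sum>ij\<in>K \<times> K. card (B ij))"
    by (rule card_UN_le) (simp add: fK)
  also have "\<dots> \<le> (\<Sum>ij\<in>K \<times> K. (CARD('a) ^ (2*r+2) + (2*r+2)) * (s n + 1))"
    by (rule sum_mono) (rule B)
  finally show ?thesis by (simp add: K_def irregular_const_def card_cartesian_product algebra_simps)
qed

lemma card_ball_mismatch:
  assumes rn: "2*r+2 \<le> n"
  shows "card {v \<in> words n. \<not> (rooted_iso (ball (rauzy L n) v r) H
      \<longleftrightarrow> rooted_iso (ball (line_graph (line_word n v)) 0 r) H)}
    \<le> (r + 1 + irregular_const r) * (s n + 1)"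
proof -
  let ?Bad = "{v \<in> words n. \<not> (rooted_iso (ball (rauzy L n) v r) H
      \<longleftrightarrow> rooted_iso (ball (line_graph (line_word n v)) 0 r) H)}"
  have good: "rooted_iso (ball (rauzy L n) v r) H \<longleftrightarrow> rooted_iso (ball (line_graph (line_word n v)) 0 r) H"
    if "v \<in> (advance ^^ (r+1)) ` regular_start n r" for v
  proof -
    from that obtain z where z: "z \<in> regular_start n r" "v = orbit z (r+1)" by auto
    have "rooted_iso (ball (line_graph (line_word n v)) 0 r) (ball (rauzy L n) v r)"
      using ball_line_word_iso_ball_rauzy[OF z(1) rn] z(2) by simp
    moreover have "snd (snd (ball (line_graph (line_word n v)) 0 r)) \<in> fst (ball (line_graph (line_word n v)) 0 r)"
      by (simp add: root_ball vertices_ball_line_graph)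
    ultimately show ?thesis using rooted_iso_transfer by metis
  qed
  have "?Bad \<subseteq> (words n - (advance ^^ (r+1)) ` words n) \<union> (advance ^^ (r+1)) ` (words n - regular_start n r)"
    using good by blast
  then have "card ?Bad
      \<le> card ((words n - (advance ^^ (r+1)) ` words n) \<union> (advance ^^ (r+1)) ` (words n - regular_start n r))"
    by (intro card_mono) auto
  also have "\<dots> \<le> card (words n - (advance ^^ (r+1)) ` words n)
      + card ((advance ^^ (r+1)) ` (words n - regular_start n r))"
    by (rule card_Un_le)
  also have "card ((advance ^^ (r+1)) ` (words n - regular_start n r)) \<le> card (words n - regular_start n r)"
    by (rule card_image_le) simp
  also have "card (words n - regular_start n r) \<le> irregular_const r * (s n + 1)"
    by (rule card_not_regular_start[OF rn])
  also have "card (words n - (advance ^^ (r+1)) ` words n) \<le> (r+1) * (s n + 1)"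
    by (rule card_words_diff_funpow_advance_image)
  finally show ?thesis by (simp add: algebra_simps)
qed

section \<open>The empirical laws of the lines seen from the vertices\<close>

text \<open>\<open>freq n\<close> is the law \<open>\<nu>\<^sub>n\<close> of \<open>line_word n v\<close> for \<open>v\<close> uniform on the vertices of \<open>R(n)\<close>;
  all error terms are multiples of \<open>defect n\<close>.\<close>

definition freq :: "nat \<Rightarrow> (int \<Rightarrow> 'a) set \<Rightarrow> real" where
  "freq n A = real (card {v \<in> words n. line_word n v \<in> A}) / real (p n)"

definition defect :: "nat \<Rightarrow> real" where
  "defect n = real (s n + 1) / real (p n)"

lemma freq_nonneg: "0 \<le> freq n A"
  by (simp add: freq_def)

lemma freq_le_1: "freq n A \<le> 1"
proof -
  have "card {v \<in> words n. line_word n v \<in> A} \<le> p n"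
    unfolding p_def by (rule card_mono) auto
  then show ?thesis using p_pos[of n] by (simp add: freq_def)
qed

lemma freq_vimage_sum:
  assumes "finite Y"
  shows "freq n {x. f x \<in> Y} = (\<Sum>y\<in>Y. freq n {x. f x = y})"
proof -
  have "{v \<in> words n. f (line_word n v) \<in> Y} = (\<Union>y\<in>Y. {v \<in> words n. f (line_word n v) = y})"
    by auto
  then have "card {v \<in> words n. f (line_word n v) \<in> Y} = (\<Sum>y\<in>Y. card {v \<in> words n. f (line_word n v) = y})"
    using assms by (simp add: card_UN_disjoint disjoint_iff)
  then show ?thesis
    by (simp add: freq_def sum_divide_distrib[symmetric])
qed

lemma freq_restrict_eq:
  assumes "finite H" "J \<subseteq> H"
  shows "freq n {x. restrict x J = y}
    = (\<Sum>z\<in>{z\<in>PiE H (\<lambda>_. UNIV). restrict z J = y}. freq n {x. restrict x H = z})"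
proof -
  define Z where "Z = {z\<in>PiE H (\<lambda>_. UNIV::'a set). restrict z J = y}"
  have "{x. restrict x J = y} = {x. restrict x H \<in> Z}"
    using assms(2) by (auto simp: Z_def restrict_restrict Int_absorb1)
  then have "freq n {x. restrict x J = y} = freq n {x. restrict x H \<in> Z}"
    by (simp only:)
  also have "\<dots> = (\<Sum>z\<in>Z. freq n {x. restrict x H = z})"
    using assms(1) by (intro freq_vimage_sum) (simp add: Z_def finite_PiE)
  finally show ?thesis by (simp only: Z_def)
qed

lemma freq_UNIV: "freq n UNIV = 1"
  using p_pos[of n] words_nonempty[of n] by (simp add: freq_def p_def)

lemma sum_freq_restrict_eq:
  assumes "finite J"
  shows "(\<Sum>y\<in>PiE J (\<lambda>_. UNIV). freq n {x. restrict x J = y}) = 1"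
proof -
  have "{x. restrict x J \<in> PiE J (\<lambda>_. UNIV)} = UNIV"
    by auto
  then show ?thesis
    using assms freq_vimage_sum[of "PiE J (\<lambda>_. UNIV)" n "\<lambda>x. restrict x J"]
    by (simp add: finite_PiE freq_UNIV)
qed

text \<open>Finite cylinders are coded by association lists, a countable index set for the diagonal
  argument.\<close>

lemma freq_cylinders_convergent_subseq:
  fixes m :: "nat \<Rightarrow> nat"
  obtains t where "strict_mono t" "\<And>J y. finite J \<Longrightarrow> convergent (\<lambda>k. freq (m (t k)) {x. restrict x J = y})"
proof -
  define J_of where "J_of l = fst ` set l" for l :: "(int \<times> 'a) list"
  define y_of where "y_of l = restrict (\<lambda>i. the (map_of l i)) (J_of l)" for l :: "(int \<times> 'a) list"
  define a where "a l n = freq (m n) {x. restrict x (J_of l) = y_of l}" for l n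
  have "\<bar>a l n\<bar> \<le> 1" for l n
    using freq_nonneg freq_le_1 by (simp add: a_def)
  then obtain t where t: "strict_mono t" "\<forall>l. convergent (\<lambda>k. a l (t k))"
    using diagonal_convergent_subseq[of a 1] by blast
  have "convergent (\<lambda>k. freq (m (t k)) {x. restrict x J = y})" if J: "finite J" for J y
  proof (cases "y \<in> PiE J (\<lambda>_. UNIV)")
    case True
    define l where "l = map (\<lambda>i. (i, y i)) (sorted_list_of_set J)"
    have "J_of l = J" using J by (simp add: J_of_def l_def image_image)
    moreover have "map_of l = (Some \<circ> y) |` J"
      unfolding l_def using J by (simp add: map_of_map_restrict)
    then have "y_of l = restrict y J"
      using \<open>J_of l = J\<close> by (auto simp: y_of_def restrict_def fun_eq_iff)
    then have "y_of l = y"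
      using True by (simp add: extensional_restrict)
    moreover have "convergent (\<lambda>k. a l (t k))" using t(2) by blast
    ultimately show ?thesis by (simp add: a_def)
  next
    case False
    then have "{x. restrict x J = y} = {}" by auto
    then show ?thesis by (simp add: freq_def convergent_const)
  qed
  with t(1) show thesis by (rule that)
qed

lemma freq_tendsto_if_cylinders_tendsto:
  assumes lim: "\<And>J y. finite J \<Longrightarrow> (\<lambda>k. freq (m k) {x. restrict x J = y}) \<longlonglongrightarrow> q J y"
    and \<rho>: "\<And>J Y. finite J \<Longrightarrow> Y \<subseteq> PiE J (\<lambda>_. UNIV) \<Longrightarrow> measure \<rho> {x. restrict x J \<in> Y} = (\<Sum>y\<in>Y. q J y)"
    and W: "finite W" "determined_by W A"
  shows "(\<lambda>k. freq (m k) A) \<longlonglongrightarrow> measure \<rho> A"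
proof -
  define Y where "Y = (\<lambda>x. restrict x W) ` A"
  have Y: "Y \<subseteq> PiE W (\<lambda>_. UNIV)" by (auto simp: Y_def)
  then have "finite Y" using W(1) by (rule finite_subset[OF _ finite_PiE]) simp
  have "(\<lambda>k. freq (m k) {x. restrict x W \<in> Y}) \<longlonglongrightarrow> (\<Sum>y\<in>Y. q W y)"
    unfolding freq_vimage_sum[OF \<open>finite Y\<close>] by (intro tendsto_sum lim W)
  moreover have "A = {x. restrict x W \<in> Y}"
    unfolding Y_def by (rule determined_by_eq[OF W(2)])
  ultimately show ?thesis
    using \<rho>[OF W(1) Y] by simp
qed

lemma freq_convergent_subseq:
  fixes m :: "nat \<Rightarrow> nat"
  obtains t \<rho> where "strict_mono t" "prob_space \<rho>" "sets \<rho> = sets seq_space"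
    "\<And>W A. finite W \<Longrightarrow> determined_by W A \<Longrightarrow> (\<lambda>k. freq (m (t k)) A) \<longlonglongrightarrow> measure \<rho> A"
proof -
  obtain t where t: "strict_mono t" "\<And>J y. finite J \<Longrightarrow> convergent (\<lambda>k. freq (m (t k)) {x. restrict x J = y})"
    using freq_cylinders_convergent_subseq[of m] by blast
  define q where "q J y = (if finite J then lim (\<lambda>k. freq (m (t k)) {x. restrict x J = y}) else 0)" for J y
  have q: "(\<lambda>k. freq (m (t k)) {x. restrict x J = y}) \<longlonglongrightarrow> q J y" if "finite J" for J y
    using t(2)[OF that, of y] that by (simp add: q_def convergent_LIMSEQ_iff)
  have q_nonneg: "0 \<le> q J y" for J y
  proof (cases "finite J")
    case True
    show ?thesis by (rule LIMSEQ_le_const[OF q[OF True]]) (simp add: freq_nonneg)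
  qed (simp add: q_def)
  have q_sum: "(\<Sum>y\<in>PiE J (\<lambda>_. UNIV). q J y) = 1" if "finite J" for J
  proof -
    have "(\<lambda>k. \<Sum>y\<in>PiE J (\<lambda>_. UNIV). freq (m (t k)) {x. restrict x J = y}) \<longlonglongrightarrow> (\<Sum>y\<in>PiE J (\<lambda>_. UNIV). q J y)"
      by (intro tendsto_sum q that)
    then have "(\<lambda>k. 1) \<longlonglongrightarrow> (\<Sum>y\<in>PiE J (\<lambda>_. UNIV). q J y)"
      using sum_freq_restrict_eq[OF that] by simp
    from LIMSEQ_unique[OF tendsto_const this] show ?thesis by simp
  qed
  have q_consistent: "q J y = (\<Sum>z\<in>{z\<in>PiE H (\<lambda>_. UNIV). restrict z J = y}. q H z)"
    if "finite H" "J \<subseteq> H" for J H y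
  proof -
    have "(\<lambda>k. \<Sum>z\<in>{z\<in>PiE H (\<lambda>_. UNIV). restrict z J = y}. freq (m (t k)) {x. restrict x H = z})
        \<longlonglongrightarrow> (\<Sum>z\<in>{z\<in>PiE H (\<lambda>_. UNIV). restrict z J = y}. q H z)"
      by (intro tendsto_sum q that)
    then show ?thesis
      using LIMSEQ_unique[OF q[OF finite_subset[OF that(2,1)], of y]] freq_restrict_eq[OF that]
      by simp
  qed
  obtain \<rho> where \<rho>: "prob_space \<rho>" "sets \<rho> = sets seq_space"
    "\<And>J Y. finite J \<Longrightarrow> Y \<subseteq> PiE J (\<lambda>_. UNIV) \<Longrightarrow> measure \<rho> {x. restrict x J \<in> Y} = (\<Sum>y\<in>Y. q J y)"
    using kolmogorov_extension_finite_alphabet[OF q_nonneg q_sum q_consistent] by blast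
  have "(\<lambda>k. freq (m (t k)) A) \<longlonglongrightarrow> measure \<rho> A" if "finite W" "determined_by W A" for W A
    using q \<rho>(3) that by (rule freq_tendsto_if_cylinders_tendsto)
  with t(1) \<rho>(1,2) show thesis by (rule that)
qed

text \<open>Since \<open>advance\<close> shifts \<open>line_word\<close> on all positions right of \<open>-n\<close>, it turns the
  counting of \<open>shiftZ -` A\<close> into that of \<open>A\<close> up to \<open>card_advance_preimage\<close>.\<close>

lemma abs_freq_shiftZ_diff_le:
  assumes A: "determined_by W A" and W: "\<forall>i\<in>W. - int n \<le> i"
  shows "\<bar>freq n (shiftZ -` A) - freq n A\<bar> \<le> defect n"
proof -
  define S where "S = {u \<in> words n. line_word n u \<in> A}"
  have "{v \<in> words n. line_word n v \<in> shiftZ -` A} = {v \<in> words n. advance v \<in> S}"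
  proof (intro Collect_cong conj_cong refl)
    fix v assume v: "v \<in> words n"
    have "\<forall>i\<in>W. shiftZ (line_word n v) i = line_word n (advance v) i"
      using W line_word_advance[OF v] by (simp add: shiftZ_def)
    then have "shiftZ (line_word n v) \<in> A \<longleftrightarrow> line_word n (advance v) \<in> A"
      using A unfolding determined_by_def by blast
    then show "line_word n v \<in> shiftZ -` A \<longleftrightarrow> advance v \<in> S"
      using v advance_words by (simp add: S_def)
  qed
  moreover have "\<bar>int (card {v \<in> words n. advance v \<in> S}) - int (card S)\<bar> \<le> int (s n) + 1"
    by (rule card_advance_preimage) (auto simp: S_def)
  then have "\<bar>real (card {v \<in> words n. advance v \<in> S}) - real (card S)\<bar> \<le> real (s n + 1)"
    by linarith
  ultimately show ?thesis
    using p_pos[of n]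
    by (simp add: freq_def defect_def S_def diff_divide_distrib[symmetric] abs_divide
        divide_right_mono)
qed

lemma freq_window_notin_L_le:
  assumes "- int n \<le> j"
  shows "freq n {x. window x j k \<notin> L} \<le> real (nat (j + int k) * (nat (j + int k) + 1)) * defect n"
proof -
  have "real (card {v \<in> words n. window (line_word n v) j k \<notin> L})
      \<le> real (nat (j + int k) * (nat (j + int k) + 1)) * real (s n + 1)"
    using card_window_line_word_notin_L[OF assms, of k]
    by (simp only: of_nat_mult[symmetric] of_nat_le_iff)
  then show ?thesis
    using p_pos[of n] by (simp add: freq_def defect_def divide_right_mono)
qed

lemma abs_bs_freq_rauzy_diff_le:
  assumes "2*r+2 \<le> n"
  shows "\<bar>bs_freq (rauzy L n) r H - freq n {x. rooted_iso (ball (line_graph x) 0 r) H}\<bar>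
    \<le> real (r + 1 + irregular_const r) * defect n"
proof -
  have "\<bar>real (card {v \<in> words n. rooted_iso (ball (rauzy L n) v r) H}) -
      real (card {v \<in> words n. rooted_iso (ball (line_graph (line_word n v)) 0 r) H})\<bar>
    \<le> real (card {v \<in> words n. \<not> (rooted_iso (ball (rauzy L n) v r) H \<longleftrightarrow>
        rooted_iso (ball (line_graph (line_word n v)) 0 r) H)})"
    by (rule abs_card_diff_le_card_mismatch) simp
  also have "\<dots> \<le> real (r + 1 + irregular_const r) * real (s n + 1)"
    using card_ball_mismatch[OF assms, of H] by (simp only: of_nat_mult[symmetric] of_nat_le_iff)
  finally show ?thesis
    using p_pos[of n]
    by (simp add: bs_freq_def freq_def defect_def vertices_rauzy p_def diff_divide_distrib[symmetric]
        abs_divide divide_right_mono)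
qed

end

section \<open>Convergence to the invariant measure of the natural extension\<close>

locale sparse_special_language = rauzy_language +
  assumes defect_tendsto_0: "defect \<longlonglongrightarrow> 0"
begin

context
  fixes u :: "nat \<Rightarrow> nat" and \<rho> :: "(int \<Rightarrow> 'a) measure"
  assumes u: "strict_mono u" and prob_space_\<rho>: "prob_space \<rho>" and sets_\<rho>: "sets \<rho> = sets seq_space"
    and freq_tendsto: "\<And>W A. finite W \<Longrightarrow> determined_by W A \<Longrightarrow> (\<lambda>k. freq (u k) A) \<longlonglongrightarrow> measure \<rho> A"
begin

lemma space_\<rho>: "space \<rho> = UNIV"
  using sets_eq_imp_space_eq[OF sets_\<rho>] by simp

lemma measure_eq_if_freq_close:
  assumes A: "finite WA" "determined_by WA A" and B: "finite WB" "determined_by WB B"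
    and close: "\<forall>n\<ge>N. \<bar>freq n A - freq n B\<bar> \<le> c * defect n"
  shows "measure \<rho> A = measure \<rho> B"
proof -
  have "(\<lambda>n. freq n A - freq n B) \<longlonglongrightarrow> 0"
    using tendsto_mult_right_zero[OF defect_tendsto_0] close by (rule LIMSEQ_0_if_eventually_abs_le)
  from LIMSEQ_subseq_LIMSEQ[OF this u]
  have "(\<lambda>k. freq (u k) A - freq (u k) B) \<longlonglongrightarrow> 0"
    by (simp add: comp_def)
  moreover have "(\<lambda>k. freq (u k) A - freq (u k) B) \<longlonglongrightarrow> measure \<rho> A - measure \<rho> B"
    by (intro tendsto_diff freq_tendsto[OF A] freq_tendsto[OF B])
  ultimately have "measure \<rho> A - measure \<rho> B = 0"
    by (rule LIMSEQ_unique[rotated])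
  then show ?thesis by simp
qed

lemma determined_by_in_sets_\<rho>: "finite W \<Longrightarrow> determined_by W A \<Longrightarrow> A \<in> sets \<rho>"
  using determined_by_in_sets sets_\<rho> by blast

lemma distr_shiftZ_limit: "distr \<rho> seq_space shiftZ = \<rho>"
proof (rule measure_eq_on_seq_space)
  interpret prob_space \<rho> by (rule prob_space_\<rho>)
  show "finite_measure (distr \<rho> seq_space shiftZ)"
    by (intro finite_measure_distr) (simp add: measurable_cong_sets[OF sets_\<rho> refl] measurable_shiftZ)
  fix J :: "int set" and Y :: "(int \<Rightarrow> 'a) set" assume J: "finite J" and "Y \<subseteq> PiE J (\<lambda>_. UNIV)"
  define B where "B = {x :: int \<Rightarrow> 'a. restrict x J \<in> Y}"
  have B: "determined_by J B" by (simp add: B_def determined_by_restrict)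
  have B': "determined_by ((\<lambda>j. j + 1) ` J) (shiftZ -` B)"
    using B unfolding determined_by_def by (auto simp: shiftZ_def)
  obtain N where "J \<subseteq> {- int N..int N}" using finite_int_set_subset_interval[OF J] by blast
  then have N: "\<forall>i\<in>J. - int N \<le> i" by auto
  have close: "\<forall>n\<ge>N. \<bar>freq n (shiftZ -` B) - freq n B\<bar> \<le> 1 * defect n"
  proof (intro allI impI)
    fix n assume "N \<le> n"
    then have "\<forall>i\<in>J. - int n \<le> i" using N by force
    then show "\<bar>freq n (shiftZ -` B) - freq n B\<bar> \<le> 1 * defect n"
      using abs_freq_shiftZ_diff_le[OF B] by simp
  qed
  have "measure \<rho> (shiftZ -` B) = measure \<rho> B"
    by (rule measure_eq_if_freq_close[OF _ B' _ B close]) (use J in auto)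
  moreover have "emeasure (distr \<rho> seq_space shiftZ) B = emeasure \<rho> (shiftZ -` B)"
    using determined_by_in_sets[OF B J] measurable_shiftZ space_\<rho>
    by (subst emeasure_distr) (simp_all add: measurable_cong_sets[OF sets_\<rho> refl])
  ultimately show "emeasure (distr \<rho> seq_space shiftZ) B = emeasure \<rho> B"
    using J B B' by (simp add: emeasure_eq_measure determined_by_in_sets_\<rho>)
qed (simp_all add: sets_\<rho>)

lemma emeasure_natext_limit: "emeasure \<rho> (natext L) = 1"
proof -
  interpret prob_space \<rho> by (rule prob_space_\<rho>)
  define bad where "bad jk = {x. window x (fst jk) (snd jk) \<notin> L}" for jk :: "int \<times> nat"
  have bad: "determined_by {fst jk..<fst jk + int (snd jk)} (bad jk)" for jk
    unfolding determined_by_def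
  proof (intro allI impI)
    fix x x' :: "int \<Rightarrow> 'a"
    assume "\<forall>i\<in>{fst jk..<fst jk + int (snd jk)}. x i = x' i"
    then have "window x (fst jk) (snd jk) = window x' (fst jk) (snd jk)"
      by (auto simp: window_def)
    then show "x \<in> bad jk \<longleftrightarrow> x' \<in> bad jk" by (simp add: bad_def)
  qed
  have "bad jk \<in> null_sets \<rho>" for jk
  proof -
    have "\<forall>n\<ge>nat (- fst jk). \<bar>freq n (bad jk) - freq n {}\<bar>
        \<le> real (nat (fst jk + int (snd jk)) * (nat (fst jk + int (snd jk)) + 1)) * defect n"
      using freq_window_notin_L_le freq_nonneg by (auto simp: bad_def freq_def)
    then have "measure \<rho> (bad jk) = measure \<rho> {}"
      by (intro measure_eq_if_freq_close[where WB="{}", OF _ bad]) (auto simp: determined_by_def)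
    then show ?thesis
      using determined_by_in_sets_\<rho>[OF _ bad] by (simp add: emeasure_eq_measure null_sets_def)
  qed
  then have "(\<Union>jk. bad jk) \<in> null_sets \<rho>" by (intro null_sets_UN') simp_all
  moreover have "natext L = space \<rho> - (\<Union>jk. bad jk)"
    using space_\<rho> by (auto simp: natext_def bad_def window_def)
  ultimately show ?thesis
    by (simp add: emeasure_compl emeasure_space_1 null_setsD1 null_setsD2)
qed

lemma limit_in_inv_probs: "\<rho> \<in> inv_probs shiftZ (natext L)"
  using prob_space_\<rho> sets_\<rho> distr_shiftZ_limit emeasure_natext_limit by (simp add: inv_probs_def)

end

lemma freq_tendsto_invariant:
  assumes \<mu>: "inv_probs shiftZ (natext L) = {\<mu>}" and "finite W" "determined_by W A"
  shows "(\<lambda>n. freq n A) \<longlonglongrightarrow> measure \<mu> A"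
proof (rule LIMSEQ_if_subseqs_LIMSEQ)
  fix m :: "nat \<Rightarrow> nat" assume m: "strict_mono m"
  obtain t \<rho> where t: "strict_mono t" "prob_space \<rho>" "sets \<rho> = sets seq_space"
    and lim: "\<And>W A. finite W \<Longrightarrow> determined_by W A \<Longrightarrow> (\<lambda>k. freq (m (t k)) A) \<longlonglongrightarrow> measure \<rho> A"
    using freq_convergent_subseq[of m] by blast
  have "strict_mono (m \<circ> t)" using m t(1) by (rule strict_mono_o)
  then have "\<rho> \<in> inv_probs shiftZ (natext L)"
    using t(2,3) lim by (intro limit_in_inv_probs) (auto simp: comp_def)
  then have "\<rho> = \<mu>" using \<mu> by simp
  then show "\<exists>t. strict_mono t \<and> (\<lambda>k. freq (m (t k)) A) \<longlonglongrightarrow> measure \<mu> A"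
    using t(1) lim[OF assms(2,3)] by blast
qed

theorem BS_limit_natext:
  assumes unique: "\<And>\<mu>1 \<mu>2. \<mu>1 \<in> inv_probs shiftZ (natext L) \<Longrightarrow> \<mu>2 \<in> inv_probs shiftZ (natext L) \<Longrightarrow> \<mu>1 = \<mu>2"
  shows "\<exists>\<mu>. inv_probs shiftZ (natext L) = {\<mu>} \<and> BS_limit_line (rauzy L) \<mu>"
proof -
  obtain t \<rho> where t: "strict_mono t" "prob_space \<rho>" "sets \<rho> = sets seq_space"
    "\<And>W A. finite W \<Longrightarrow> determined_by W A \<Longrightarrow> (\<lambda>k. freq (t k) A) \<longlonglongrightarrow> measure \<rho> A"
    using freq_convergent_subseq[of "\<lambda>n. n"] by blast
  have "\<rho> \<in> inv_probs shiftZ (natext L)" using t by (rule limit_in_inv_probs)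
  then have \<rho>: "inv_probs shiftZ (natext L) = {\<rho>}" using unique by auto
  have "BS_limit_line (rauzy L) \<rho>"
    unfolding BS_limit_line_def
  proof (intro allI impI)
    fix r and H :: "(nat, 'a) rooted_ldigraph"
    define T where "T = {x :: int \<Rightarrow> 'a. rooted_iso (ball (line_graph x) 0 r) H}"
    have "(\<lambda>n. freq n T) \<longlonglongrightarrow> measure \<rho> T"
      unfolding T_def
      by (rule freq_tendsto_invariant[OF \<rho> _ determined_by_rooted_iso_ball_line_graph]) simp
    moreover have "(\<lambda>n. real (r + 1 + irregular_const r) * defect n) \<longlonglongrightarrow> 0"
      by (intro tendsto_mult_right_zero defect_tendsto_0)
    then have "(\<lambda>n. bs_freq (rauzy L n) r H - freq n T) \<longlonglongrightarrow> 0"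
      by (rule LIMSEQ_0_if_eventually_abs_le[of _ "2*r+2"])
        (use abs_bs_freq_rauzy_diff_le[of r _ H] in \<open>auto simp: T_def\<close>)
    ultimately have "(\<lambda>n. (bs_freq (rauzy L n) r H - freq n T) + freq n T) \<longlonglongrightarrow> 0 + measure \<rho> T"
      by (intro tendsto_add) auto
    then have "(\<lambda>n. bs_freq (rauzy L n) r H) \<longlonglongrightarrow> measure \<rho> T"
      by simp
    then show "(\<lambda>n. bs_freq (rauzy L n) r H) \<longlonglongrightarrow> measure \<rho> {x \<in> space \<rho>. rooted_iso (ball (line_graph x) 0 r) H}"
      using sets_eq_imp_space_eq[OF t(3)] by (simp add: T_def)
  qed
  with \<rho> show ?thesis by blast
qed

end

lemma (in rauzy_language) complexity_eq_p: "complexity L = p"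
  by (simp add: fun_eq_iff complexity_def p_def words_def)

lemma (in rauzy_language) sparse_special_language:
  assumes "\<not> bdd_above (range (complexity L))"
    and "(\<lambda>n. real (complexity L (Suc n)) / real (complexity L n)) \<longlonglongrightarrow> 1"
  shows "sparse_special_language L"
  using increment_over_value_tendsto_0[OF p_pos p_mono_Suc assms(2,1)[unfolded complexity_eq_p]]
  by unfold_locales (simp add: defect_def[abs_def] s_def)

section \<open>Subshifts of infinite words\<close>

lemma in_closure_seq_top_iff:
  "x \<in> seq_top closure_of S \<longleftrightarrow> (\<forall>K. finite K \<longrightarrow> (\<exists>y\<in>S. \<forall>i\<in>K. y i = x i))"
proof
  assume x: "x \<in> seq_top closure_of S"
  show "\<forall>K. finite K \<longrightarrow> (\<exists>y\<in>S. \<forall>i\<in>K. y i = x i)"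
  proof (intro allI impI)
    fix K :: "'a set" assume K: "finite K"
    define T where "T = PiE UNIV (\<lambda>i. if i \<in> K then {x i} else UNIV)"
    have "openin seq_top T"
      unfolding seq_top_def T_def openin_PiE_gen
      by (rule disjI2) (auto intro: finite_subset[OF _ K])
    moreover have "x \<in> T" by (auto simp: T_def PiE_iff)
    ultimately obtain y where "y \<in> S" "y \<in> T" using x unfolding in_closure_of by blast
    then show "\<exists>y\<in>S. \<forall>i\<in>K. y i = x i"
      by (intro bexI[of _ y]) (auto simp: T_def PiE_iff split: if_splits)
  qed
next
  assume h: "\<forall>K. finite K \<longrightarrow> (\<exists>y\<in>S. \<forall>i\<in>K. y i = x i)"
  show "x \<in> seq_top closure_of S"
    unfolding in_closure_of
  proof (intro conjI allI impI)
    show "x \<in> topspace seq_top" by (simp add: seq_top_def)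
  next
    fix T assume T: "x \<in> T \<and> openin seq_top T"
    then obtain U where U: "finite {i. U i \<noteq> UNIV}" "x \<in> PiE UNIV U" "PiE UNIV U \<subseteq> T"
      unfolding seq_top_def openin_product_topology_alt by force
    obtain y where y: "y \<in> S" "\<forall>i\<in>{i. U i \<noteq> UNIV}. y i = x i" using h U(1) by blast
    have "y \<in> PiE UNIV U" using y(2) U(2) by (auto simp: PiE_iff) (metis UNIV_I)
    then show "\<exists>y. y \<in> S \<and> y \<in> T" using y(1) U(3) by blast
  qed
qed

lemma lang_N_iff: "w \<in> lang_N \<omega> \<longleftrightarrow> (\<exists>j. \<forall>i<length w. w ! i = \<omega> (j + i))"
proof
  assume "w \<in> lang_N \<omega>"
  then obtain j k where "w = map (\<lambda>i. \<omega> (j + i)) [0..<k]" by (auto simp: lang_N_def)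
  then show "\<exists>j. \<forall>i<length w. w ! i = \<omega> (j + i)" by auto
next
  assume "\<exists>j. \<forall>i<length w. w ! i = \<omega> (j + i)"
  then obtain j where j: "\<forall>i<length w. w ! i = \<omega> (j + i)" by blast
  have "w = map (\<lambda>i. \<omega> (j + i)) [0..<length w]" using j by (intro nth_equalityI) auto
  then show "w \<in> lang_N \<omega>" by (auto simp: lang_N_def)
qed

lemma lang_Z_iff: "w \<in> lang_Z \<omega> \<longleftrightarrow> (\<exists>j. \<forall>i<length w. w ! i = \<omega> (j + int i))"
proof
  assume "w \<in> lang_Z \<omega>"
  then obtain j k where "w = map (\<lambda>i. \<omega> (j + int i)) [0..<k]" by (auto simp: lang_Z_def)
  then show "\<exists>j. \<forall>i<length w. w ! i = \<omega> (j + int i)" by auto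
next
  assume "\<exists>j. \<forall>i<length w. w ! i = \<omega> (j + int i)"
  then obtain j where j: "\<forall>i<length w. w ! i = \<omega> (j + int i)" by blast
  have "w = map (\<lambda>i. \<omega> (j + int i)) [0..<length w]" using j by (intro nth_equalityI) auto
  then show "w \<in> lang_Z \<omega>" by (auto simp: lang_Z_def)
qed

lemma not_left_extendable_lang_N:
  assumes w: "w \<in> lang_N \<omega>" and not_ext: "\<forall>a. a # w \<notin> lang_N \<omega>"
  shows "w = map \<omega> [0..<length w]"
proof -
  obtain j where j: "\<forall>i<length w. w ! i = \<omega> (j + i)"
    using w by (auto simp: lang_N_iff)
  have "j = 0"
  proof (rule ccontr)
    assume "j \<noteq> 0"
    then obtain j' where j': "j = Suc j'" by (cases j) auto
    have "\<omega> j' # w \<in> lang_N \<omega>" unfolding lang_N_iff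
    proof (intro exI[of _ j'] allI impI)
      fix i assume "i < length (\<omega> j' # w)"
      then show "(\<omega> j' # w) ! i = \<omega> (j' + i)" using j j' by (cases i) auto
    qed
    then show False using not_ext by blast
  qed
  then show ?thesis using j by (intro nth_equalityI) auto
qed

lemma left_extendable_lang_Z: "w \<in> lang_Z \<omega> \<Longrightarrow> \<exists>a. a # w \<in> lang_Z \<omega>"
proof -
  assume "w \<in> lang_Z \<omega>"
  then obtain j where j: "\<forall>i<length w. w ! i = \<omega> (j + int i)" by (auto simp: lang_Z_iff)
  have "\<omega> (j - 1) # w \<in> lang_Z \<omega>" unfolding lang_Z_iff
  proof (intro exI[of _ "j - 1"] allI impI)
    fix i assume "i < length (\<omega> (j - 1) # w)"
    then show "(\<omega> (j - 1) # w) ! i = \<omega> (j - 1 + int i)" using j by (cases i) auto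
  qed
  then show ?thesis by blast
qed

lemma rauzy_language_lang_N: "rauzy_language (lang_N (\<omega> :: nat \<Rightarrow> 'a::finite))"
proof
  fix u v :: "'a list"
  assume "u @ v \<in> lang_N \<omega>"
  then obtain j where j: "\<forall>i<length (u @ v). (u @ v) ! i = \<omega> (j + i)" by (auto simp: lang_N_iff)
  show "u \<in> lang_N \<omega>" unfolding lang_N_iff
  proof (intro exI allI impI)
    fix i assume "i < length u" then show "u ! i = \<omega> (j + i)"
      using j[rule_format, of i] by (simp add: nth_append)
  qed
next
  fix u v :: "'a list"
  assume "u @ v \<in> lang_N \<omega>"
  then obtain j where j: "\<forall>i<length (u @ v). (u @ v) ! i = \<omega> (j + i)" by (auto simp: lang_N_iff)
  show "v \<in> lang_N \<omega>" unfolding lang_N_iff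
  proof (intro exI[of _ "j + length u"] allI impI)
    fix i assume "i < length v" then show "v ! i = \<omega> (j + length u + i)"
      using j[rule_format, of "length u + i"] by (simp add: nth_append add.assoc)
  qed
next
  fix w assume "w \<in> lang_N \<omega>"
  then obtain j where j: "\<forall>i<length w. w ! i = \<omega> (j + i)" by (auto simp: lang_N_iff)
  have "w @ [\<omega> (j + length w)] \<in> lang_N \<omega>" unfolding lang_N_iff
    by (intro exI[of _ j] allI impI) (use j in \<open>auto simp: nth_append less_Suc_eq\<close>)
  then show "\<exists>b. w @ [b] \<in> lang_N \<omega>" by blast
next
  fix n
  have "{w \<in> lang_N \<omega>. length w = n \<and> (\<forall>a. a # w \<notin> lang_N \<omega>)} \<subseteq> {map \<omega> [0..<n]}"
    using not_left_extendable_lang_N by blast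
  then show "card {w \<in> lang_N \<omega>. length w = n \<and> (\<forall>a. a # w \<notin> lang_N \<omega>)} \<le> 1"
    using card_mono[of "{map \<omega> [0..<n]}"] by fastforce
next
  show "[] \<in> lang_N \<omega>" by (simp add: lang_N_iff)
qed

lemma rauzy_language_lang_Z: "rauzy_language (lang_Z (\<omega> :: int \<Rightarrow> 'a::finite))"
proof
  fix u v :: "'a list"
  assume "u @ v \<in> lang_Z \<omega>"
  then obtain j where j: "\<forall>i<length (u @ v). (u @ v) ! i = \<omega> (j + int i)" by (auto simp: lang_Z_iff)
  show "u \<in> lang_Z \<omega>" unfolding lang_Z_iff
  proof (intro exI allI impI)
    fix i assume "i < length u" then show "u ! i = \<omega> (j + int i)"
      using j[rule_format, of i] by (simp add: nth_append)
  qed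
next
  fix u v :: "'a list"
  assume "u @ v \<in> lang_Z \<omega>"
  then obtain j where j: "\<forall>i<length (u @ v). (u @ v) ! i = \<omega> (j + int i)" by (auto simp: lang_Z_iff)
  show "v \<in> lang_Z \<omega>" unfolding lang_Z_iff
  proof (intro exI[of _ "j + int (length u)"] allI impI)
    fix i assume "i < length v" then show "v ! i = \<omega> (j + int (length u) + int i)"
      using j[rule_format, of "length u + i"] by (simp add: nth_append add.assoc)
  qed
next
  fix w assume "w \<in> lang_Z \<omega>"
  then obtain j where j: "\<forall>i<length w. w ! i = \<omega> (j + int i)" by (auto simp: lang_Z_iff)
  have "w @ [\<omega> (j + int (length w))] \<in> lang_Z \<omega>" unfolding lang_Z_iff
    by (intro exI[of _ j] allI impI) (use j in \<open>auto simp: nth_append less_Suc_eq\<close>)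
  then show "\<exists>b. w @ [b] \<in> lang_Z \<omega>" by blast
next
  fix n
  have "{w \<in> lang_Z \<omega>. length w = n \<and> (\<forall>a. a # w \<notin> lang_Z \<omega>)} = {}"
    using left_extendable_lang_Z by blast
  then show "card {w \<in> lang_Z \<omega>. length w = n \<and> (\<forall>a. a # w \<notin> lang_Z \<omega>)} \<le> 1"
    by (simp only: card.empty zero_le)
next
  show "[] \<in> lang_Z \<omega>" by (simp add: lang_Z_iff)
qed

lemma funpow_shiftZ: "(shiftZ ^^ m) x = (\<lambda>i. x (i + int m))"
  by (induction m) (auto simp: shiftZ_def algebra_simps)

lemma funpow_shiftN: "(shiftN ^^ m) x = (\<lambda>i. x (i + m))"
  by (induction m) (auto simp: shiftN_def algebra_simps)

lemma window_in_lang_Z_iff: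
  "window \<tau> j k \<in> lang_Z \<omega> \<longleftrightarrow> (\<exists>j'. \<forall>i<k. \<tau> (j + int i) = \<omega> (j' + int i))"
  by (simp add: lang_Z_iff window_def)

lemma natext_lang_Z_subset_SigmaZ: "natext (lang_Z \<omega>) \<subseteq> SigmaZ \<omega>"
proof
  fix \<tau> assume \<tau>: "\<tau> \<in> natext (lang_Z \<omega>)"
  show "\<tau> \<in> SigmaZ \<omega>"
    unfolding SigmaZ_def in_closure_seq_top_iff
  proof (intro allI impI)
    fix K :: "int set" assume "finite K"
    then obtain N where N: "K \<subseteq> {- int N..int N}"
      using finite_int_set_subset_interval by blast
    have "window \<tau> (- int N) (2*N+1) \<in> lang_Z \<omega>"
      using \<tau> by (simp add: natext_iff_window)
    then obtain j where j: "\<And>i. i < 2*N+1 \<Longrightarrow> \<tau> (- int N + int i) = \<omega> (j + int i)"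
      unfolding window_in_lang_Z_iff by blast
    have "\<omega> (i + (j + int N)) = \<tau> i" if "i \<in> K" for i
    proof -
      have "- int N \<le> i" "i \<le> int N" using N that by auto
      then have "nat (i + int N) < 2*N+1" "- int N + int (nat (i + int N)) = i"
        by (simp_all add: nat_less_iff)
      then show ?thesis using j[of "nat (i + int N)"] by (simp add: algebra_simps)
    qed
    then show "\<exists>y\<in>{\<lambda>i. \<omega> (i + k) |k. True}. \<forall>i\<in>K. y i = \<tau> i"
      by (intro bexI[of _ "\<lambda>i. \<omega> (i + (j + int N))"]) auto
  qed
qed

lemma SigmaZ_subset_natext_lang_Z: "SigmaZ \<omega> \<subseteq> natext (lang_Z \<omega>)"
proof
  fix \<tau> assume "\<tau> \<in> SigmaZ \<omega>"
  then have close: "\<And>K. finite K \<Longrightarrow> \<exists>k. \<forall>i\<in>K. \<omega> (i + k) = \<tau> i"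
    unfolding SigmaZ_def in_closure_seq_top_iff by blast
  have "window \<tau> j k \<in> lang_Z \<omega>" for j k
  proof -
    obtain k0 where k0: "\<forall>i\<in>{j..<j + int k}. \<omega> (i + k0) = \<tau> i"
      using close[of "{j..<j + int k}"] by blast
    have "\<tau> (j + int i) = \<omega> (j + k0 + int i)" if "i < k" for i
    proof -
      have "\<omega> (j + int i + k0) = \<tau> (j + int i)" using k0 that by simp
      then show ?thesis by (simp add: algebra_simps)
    qed
    then show ?thesis unfolding window_in_lang_Z_iff by blast
  qed
  then show "\<tau> \<in> natext (lang_Z \<omega>)"
    by (simp add: natext_iff_window)
qed

lemma natext_lang_Z_eq_SigmaZ: "natext (lang_Z \<omega>) = SigmaZ \<omega>"
  using natext_lang_Z_subset_SigmaZ SigmaZ_subset_natext_lang_Z by blast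

definition nonneg_part :: "(int \<Rightarrow> 'a) \<Rightarrow> nat \<Rightarrow> 'a" where
  "nonneg_part x n = x (int n)"

lemma nonneg_part_natext_in_SigmaN:
  assumes x: "x \<in> natext (lang_N (\<omega> :: nat \<Rightarrow> 'a))"
  shows "nonneg_part x \<in> SigmaN \<omega>"
  unfolding SigmaN_def in_closure_seq_top_iff
proof (intro allI impI)
  fix K :: "nat set" assume K: "finite K"
  obtain M where M: "K \<subseteq> {..<M}" using finite_nat_bounded[OF K] by blast
  have "map (\<lambda>i. x (0 + int i)) [0..<M] \<in> lang_N \<omega>"
    using x by (simp only: natext_def mem_Collect_eq)
  then obtain j where j: "\<forall>i<M. x (int i) = \<omega> (j + i)" by (auto simp: lang_N_iff)
  have "\<forall>i\<in>K. (shiftN ^^ j) \<omega> i = x (int i)" using M j by (auto simp: funpow_shiftN add.commute)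
  then show "\<exists>y\<in>range (\<lambda>k. (shiftN ^^ k) \<omega>). \<forall>i\<in>K. y i = nonneg_part x i"
    by (auto simp: nonneg_part_def)
qed

lemma measurable_nonneg_part: "nonneg_part \<in> measurable seq_space seq_space"
  unfolding nonneg_part_def seq_space_def by (rule measurable_PiM_single') (auto simp: space_PiM)

lemma measurable_shiftN: "shiftN \<in> measurable seq_space seq_space"
  unfolding shiftN_def seq_space_def by (rule measurable_PiM_single') (auto simp: space_PiM)

lemma shiftN_comp_nonneg_part: "shiftN \<circ> nonneg_part = nonneg_part \<circ> shiftZ"
  by (auto simp: shiftN_def shiftZ_def nonneg_part_def fun_eq_iff add.commute)

lemma distr_nonneg_part_in_inv_probs:
  assumes \<mu>: "\<mu> \<in> inv_probs shiftZ (natext (lang_N (\<omega> :: nat \<Rightarrow> 'a::finite)))"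
    and SigmaN: "SigmaN \<omega> \<in> sets seq_space"
  shows "distr \<mu> seq_space nonneg_part \<in> inv_probs shiftN (SigmaN \<omega>)"
proof -
  have sets_\<mu>: "sets \<mu> = sets seq_space" and "prob_space \<mu>"
    and natext: "emeasure \<mu> (natext (lang_N \<omega>)) = 1" and inv: "distr \<mu> seq_space shiftZ = \<mu>"
    using \<mu> by (auto simp: inv_probs_def)
  interpret prob_space \<mu> by fact
  have space_\<mu>: "space \<mu> = UNIV" using sets_eq_imp_space_eq[OF sets_\<mu>] by simp
  have meas: "nonneg_part \<in> measurable \<mu> seq_space" "shiftZ \<in> measurable \<mu> seq_space"
    using measurable_nonneg_part measurable_shiftZ
    by (simp_all add: measurable_cong_sets[OF sets_\<mu> refl])
  have "emeasure \<mu> (natext (lang_N \<omega>)) \<le> emeasure \<mu> (nonneg_part -` SigmaN \<omega> \<inter> space \<mu>)"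
    using nonneg_part_natext_in_SigmaN measurable_sets[OF meas(1) SigmaN] space_\<mu>
    by (intro emeasure_mono) auto
  then have "emeasure (distr \<mu> seq_space nonneg_part) (SigmaN \<omega>) = 1"
    using natext emeasure_le_1 by (simp add: emeasure_distr[OF meas(1) SigmaN] antisym)
  moreover have "distr (distr \<mu> seq_space nonneg_part) seq_space shiftN = distr \<mu> seq_space nonneg_part"
    by (metis distr_distr[OF measurable_shiftN meas(1)] distr_distr[OF measurable_nonneg_part meas(2)]
        shiftN_comp_nonneg_part inv)
  ultimately show ?thesis
    using prob_space_distr[OF meas(1)] by (simp add: inv_probs_def)
qed

lemma funpow_shiftZ_invariant:
  assumes sets_\<mu>: "sets \<mu> = sets seq_space" and inv: "distr \<mu> seq_space shiftZ = \<mu>"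
  shows "(shiftZ ^^ m) \<in> measurable \<mu> seq_space \<and> distr \<mu> seq_space (shiftZ ^^ m) = \<mu>"
proof (induction m)
  case 0
  show ?case using sets_\<mu> by (simp add: distr_id2 id_def measurable_ident_sets)
next
  case (Suc m)
  have "shiftZ \<circ> (shiftZ ^^ m) \<in> measurable \<mu> seq_space"
    using Suc.IH measurable_shiftZ by (blast intro: measurable_comp)
  moreover have "distr \<mu> seq_space (shiftZ \<circ> (shiftZ ^^ m)) = \<mu>"
    using distr_distr[OF measurable_shiftZ Suc.IH[THEN conjunct1]] Suc.IH inv by simp
  ultimately show ?case by (simp only: funpow.simps(2))
qed

text \<open>A cylinder of \<open>A\<^sup>\<int>\<close> is moved into the nonnegative coordinates by a power of the shift,
  where it is seen by the projection to \<open>A\<^sup>\<nat>\<close>.\<close>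

lemma emeasure_cylinder_eq_distr_nonneg_part:
  fixes Y :: "(int \<Rightarrow> 'a::finite) set"
  assumes sets_\<mu>: "sets \<mu> = sets seq_space" and inv: "distr \<mu> seq_space shiftZ = \<mu>"
    and J: "finite J" "\<forall>j\<in>J. - int N \<le> j"
  shows "emeasure \<mu> {x. restrict x J \<in> Y} =
    emeasure (distr \<mu> seq_space nonneg_part) {y. restrict (\<lambda>j. y (nat (j + int N))) J \<in> Y}"
proof -
  define B where "B = {y :: nat \<Rightarrow> 'a. restrict (\<lambda>j. y (nat (j + int N))) J \<in> Y}"
  have det: "determined_by ((\<lambda>j. nat (j + int N)) ` J) B"
    unfolding determined_by_def
  proof (intro allI impI)
    fix y y' :: "nat \<Rightarrow> 'a"
    assume "\<forall>i\<in>(\<lambda>j. nat (j + int N)) ` J. y i = y' i"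
    then have "restrict (\<lambda>j. y (nat (j + int N))) J = restrict (\<lambda>j. y' (nat (j + int N))) J"
      by (intro restrict_ext) simp
    then show "y \<in> B \<longleftrightarrow> y' \<in> B" by (simp add: B_def)
  qed
  have B: "B \<in> sets seq_space"
    by (rule determined_by_in_sets[OF det]) (use J(1) in auto)
  have meas: "nonneg_part \<in> measurable \<mu> seq_space"
    using measurable_nonneg_part by (simp add: measurable_cong_sets[OF sets_\<mu> refl])
  have "nonneg_part x \<in> B \<longleftrightarrow> (shiftZ ^^ N) x \<in> {x. restrict x J \<in> Y}" for x
  proof -
    have "restrict (\<lambda>j. nonneg_part x (nat (j + int N))) J = restrict ((shiftZ ^^ N) x) J"
      using J(2) by (intro restrict_ext) (auto simp: nonneg_part_def funpow_shiftZ)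
    then show ?thesis by (simp add: B_def)
  qed
  then have vimage_eq: "nonneg_part -` B \<inter> space \<mu> = (shiftZ ^^ N) -` {x. restrict x J \<in> Y} \<inter> space \<mu>"
    by blast
  have C: "{x. restrict x J \<in> Y} \<in> sets seq_space"
    using J(1) by (intro determined_by_in_sets[OF determined_by_restrict])
  have shift: "(shiftZ ^^ N) \<in> measurable \<mu> seq_space" "distr \<mu> seq_space (shiftZ ^^ N) = \<mu>"
    using funpow_shiftZ_invariant[OF sets_\<mu> inv] by blast+
  have "emeasure (distr \<mu> seq_space nonneg_part) B = emeasure \<mu> (nonneg_part -` B \<inter> space \<mu>)"
    by (rule emeasure_distr[OF meas B])
  also have "\<dots> = emeasure (distr \<mu> seq_space (shiftZ ^^ N)) {x. restrict x J \<in> Y}"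
    unfolding vimage_eq by (rule emeasure_distr[OF shift(1) C, symmetric])
  also have "\<dots> = emeasure \<mu> {x. restrict x J \<in> Y}"
    using shift(2) by simp
  finally show ?thesis by (simp add: B_def)
qed

lemma inv_probs_natext_lang_N_unique:
  assumes UE: "uniquely_ergodic shiftN (SigmaN (\<omega> :: nat \<Rightarrow> 'a::finite))"
    and \<mu>1: "\<mu>1 \<in> inv_probs shiftZ (natext (lang_N \<omega>))" and \<mu>2: "\<mu>2 \<in> inv_probs shiftZ (natext (lang_N \<omega>))"
  shows "\<mu>1 = \<mu>2"
proof (rule measure_eq_on_seq_space)
  obtain M where M: "M \<in> inv_probs shiftN (SigmaN \<omega>)"
    using UE unfolding uniquely_ergodic_def by blast
  then have "SigmaN \<omega> \<in> sets seq_space"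
    using emeasure_notin_sets[of "SigmaN \<omega>" M] by (auto simp: inv_probs_def)
  then have distr_eq: "distr \<mu> seq_space nonneg_part = M" if "\<mu> \<in> inv_probs shiftZ (natext (lang_N \<omega>))" for \<mu>
    using distr_nonneg_part_in_inv_probs[OF that] M UE unfolding uniquely_ergodic_def by blast
  fix J :: "int set" and Y :: "(int \<Rightarrow> 'a) set"
  assume "finite J"
  moreover obtain N where "\<forall>j\<in>J. - int N \<le> j"
    using finite_int_set_subset_interval[OF \<open>finite J\<close>] by fastforce
  ultimately show "emeasure \<mu>1 {x. restrict x J \<in> Y} = emeasure \<mu>2 {x. restrict x J \<in> Y}"
    using \<mu>1 \<mu>2 distr_eq[OF \<mu>1] distr_eq[OF \<mu>2]
    by (simp add: inv_probs_def emeasure_cylinder_eq_distr_nonneg_part)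
qed (use \<mu>1 \<mu>2 in \<open>auto simp: inv_probs_def prob_space_def\<close>)

lemma inv_probs_natext_lang_Z_unique:
  assumes "uniquely_ergodic shiftZ (SigmaZ (\<omega> :: int \<Rightarrow> 'a::finite))"
    and "\<mu>1 \<in> inv_probs shiftZ (natext (lang_Z \<omega>))" and "\<mu>2 \<in> inv_probs shiftZ (natext (lang_Z \<omega>))"
  shows "\<mu>1 = \<mu>2"
  using assms unfolding uniquely_ergodic_def natext_lang_Z_eq_SigmaZ by blast

theorem theorem1p3:
  shows
  "(\<forall>\<omega> :: nat \<Rightarrow> 'a :: finite.
      uniquely_ergodic shiftN (SigmaN \<omega>) \<and>
      \<not> bdd_above (range (complexity (lang_N \<omega>))) \<and>
      (\<lambda>n. real (complexity (lang_N \<omega>) (Suc n)) / real (complexity (lang_N \<omega>) n)) \<longlonglongrightarrow> 1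
      \<longrightarrow> (\<exists>\<mu>. inv_probs shiftZ (natext (lang_N \<omega>)) = {\<mu>} \<and>
              BS_limit_line (rauzy (lang_N \<omega>)) \<mu>))
 \<and> (\<forall>\<omega> :: int \<Rightarrow> 'a :: finite.
      uniquely_ergodic shiftZ (SigmaZ \<omega>) \<and>
      \<not> bdd_above (range (complexity (lang_Z \<omega>))) \<and>
      (\<lambda>n. real (complexity (lang_Z \<omega>) (Suc n)) / real (complexity (lang_Z \<omega>) n)) \<longlonglongrightarrow> 1
      \<longrightarrow> (\<exists>\<mu>. inv_probs shiftZ (natext (lang_Z \<omega>)) = {\<mu>} \<and>
              BS_limit_line (rauzy (lang_Z \<omega>)) \<mu>))"
proof (intro conjI allI impI; elim conjE)
  fix \<omega> :: "nat \<Rightarrow> 'a"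
  assume ergodic: "uniquely_ergodic shiftN (SigmaN \<omega>)" and growth: "\<not> bdd_above (range (complexity (lang_N \<omega>)))"
    "(\<lambda>n. real (complexity (lang_N \<omega>) (Suc n)) / real (complexity (lang_N \<omega>) n)) \<longlonglongrightarrow> 1"
  have "sparse_special_language (lang_N \<omega>)"
    using rauzy_language_lang_N growth by (rule rauzy_language.sparse_special_language)
  then show "\<exists>\<mu>. inv_probs shiftZ (natext (lang_N \<omega>)) = {\<mu>} \<and> BS_limit_line (rauzy (lang_N \<omega>)) \<mu>"
    by (rule sparse_special_language.BS_limit_natext[OF _ inv_probs_natext_lang_N_unique[OF ergodic]])
next
  fix \<omega> :: "int \<Rightarrow> 'a"
  assume ergodic: "uniquely_ergodic shiftZ (SigmaZ \<omega>)" and growth: "\<not> bdd_above (range (complexity (lang_Z \<omega>)))"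
    "(\<lambda>n. real (complexity (lang_Z \<omega>) (Suc n)) / real (complexity (lang_Z \<omega>) n)) \<longlonglongrightarrow> 1"
  have "sparse_special_language (lang_Z \<omega>)"
    using rauzy_language_lang_Z growth by (rule rauzy_language.sparse_special_language)
  then show "\<exists>\<mu>. inv_probs shiftZ (natext (lang_Z \<omega>)) = {\<mu>} \<and> BS_limit_line (rauzy (lang_Z \<omega>)) \<mu>"
    by (rule sparse_special_language.BS_limit_natext[OF _ inv_probs_natext_lang_Z_unique[OF ergodic]])
qed

end
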